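(* Let $N$ be a positive integer and let $\mathbf K_1\in\mathbb C^{N\times N}$ be an invertible constant matrix such that $\mathbf K_1$ and $-(\mathbf K_1^* )^{-1}$ have no eigenvalue in common. Let $\xi_n,\eta_n$ ($n=1,2,\dots$) be real independent variables, $z_n=\xi_n+\mathrm i\eta_n$, $\bar z_n=z_n^*=\xi_n-\mathrm i\eta_n$. Let $\mathbf r_1,\mathbf s_1\in\mathbb C^N$ (column vectors) and $\mathbf M_1\in\mathbb C^{N\times N}$ be functions of these variables satisfying, for $n=1,2,\dots$, $$\mathbf K_1\mathbf M_1+\mathbf M_1(\mathbf K_1^* )^{-1}=-\mathbf r_1\mathbf s_1^\dagger(\mathbf K_1^* )^{-1},$$ $$\partial_{\xi_n}\mathbf r_1=(\mathbf K_1^n+(-1)^{n+1}\mathbf K_1^{-n})\mathbf r_1,\quad \partial_{\eta_n}\mathbf r_1=\mathrm i(\mathbf K_1^n-(-1)^{n+1}\mathbf K_1^{-n})\mathbf r_1,$$ $$\partial_{\xi_n}\mathbf s_1=((\mathbf K_1^T)^n+(-1)^{n+1}(\mathbf K_1^T)^{-n})\mathbf s_1,\quad \partial_{\eta_n}\mathbf s_1=\mathrm i((\mathbf K_1^T)^n-(-1)^{n+1}(\mathbf K_1^T)^{-n})\mathbf s_1.$$ On the domain where $\mathbf I_N-\mathbf M_1^*\mathbf M_1$ is invertible, define $$s_1^{(-1,0)}=\mathbf s_1^\dagger(\mathbf K_1^* )^{-1}(\mathbf I_N-\mathbf M_1^*\mathbf M_1)^{-1}\mathbf M_1^*\mathbf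 K_1^{-1}\mathbf r_1,\quad s_3^{(-1,0)}=\mathbf s_1^T(\mathbf I_N-\mathbf M_1\mathbf M_1^* )^{-1}\mathbf K_1^{-1}\mathbf r_1,$$ $$s_4^{(-1,0)}=\mathbf s_1^T\mathbf M_1(\mathbf I_N-\mathbf M_1^*\mathbf M_1)^{-1}\mathbf r_1^*,$$ and $$\mathbf v=\begin{pmatrix}1-s_1^{(-1,0)}&-(s_3^{(-1,0)})^*\\ -s_3^{(-1,0)}&1-s_4^{(-1,0)}\end{pmatrix}.$$ Then $\mathbf v$ solves the self-dual Yang--Mills equation $$(\mathbf v_{z_{n+1}}\mathbf v^{-1})_{\bar z_{n+1}}+(\mathbf v_{\bar z_n}\mathbf v^{-1})_{z_n}=0,\qquad n=1,2,\dots,$$ and $\mathbf v=\mathbf v^\dagger$, $\det\mathbf v=1$; consequently at each point $\mathbf v$ is either positive definite or negative definite.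
   Context: $^*$ denotes entrywise complex conjugation, $^T$ transpose, $^\dagger$ conjugate transpose, $\mathbf I_N$ the $N\times N$ identity. Derivatives with respect to $z_n,\bar z_n$ are the Wirtinger-type derivatives $\partial_{z_n}=\tfrac12(\partial_{\xi_n}-\mathrm i\partial_{\eta_n})$, $\partial_{\bar z_n}=\tfrac12(\partial_{\xi_n}+\mathrm i\partial_{\eta_n})$ (so that $\partial_{\xi_n}=\partial_{z_n}+\partial_{\bar z_n}$, $\partial_{\eta_n}=\mathrm i(\partial_{z_n}-\partial_{\bar z_n})$); subscripts denote partial derivatives. *)

theory Defs
  imports "HOL-Analysis.Analysis"
begin

text \<open>Complex matrices are of type complex^'n^'n (N = CARD('n)), column vectors complex^'n.
  A point of the variable space is a pair of sequences xi, eta :: nat => real;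
  only indices n >= 1 are used (paper's indexing).\<close>

definition mconj :: "complex^'m^'n \<Rightarrow> complex^'m^'n" where
  "mconj A = (\<chi> i j. cnj (A $ i $ j))"

definition vconj :: "complex^'n \<Rightarrow> complex^'n" where
  "vconj x = (\<chi> i. cnj (x $ i))"

definition adj :: "complex^'m^'n \<Rightarrow> complex^'n^'m" where
  "adj A = transpose (mconj A)"

definition msmult :: "complex \<Rightarrow> complex^'m^'n \<Rightarrow> complex^'m^'n" where
  "msmult c A = (\<chi> i j. c * A $ i $ j)"

definition mpow :: "complex^'n^'n \<Rightarrow> nat \<Rightarrow> complex^'n^'n" where
  "mpow A k = (((**) A) ^^ k) (mat 1)"

definition bil :: "complex^'n \<Rightarrow> complex^'n \<Rightarrow> complex" where
  "bil x y = (\<Sum>i\<in>UNIV. x $ i * y $ i)"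

definition outer :: "complex^'n \<Rightarrow> complex^'n \<Rightarrow> complex^'n^'n" where
  "outer x y = (\<chi> i j. x $ i * y $ j)"

definition is_eigenvalue :: "complex^'n^'n \<Rightarrow> complex \<Rightarrow> bool" where
  "is_eigenvalue A \<mu> \<longleftrightarrow> (\<exists>x. x \<noteq> 0 \<and> A *v x = \<mu> *s x)"

definition pos_def :: "complex^'n^'n \<Rightarrow> bool" where
  "pos_def A \<longleftrightarrow> (\<forall>x. x \<noteq> 0 \<longrightarrow>
     Im (bil (vconj x) (A *v x)) = 0 \<and> Re (bil (vconj x) (A *v x)) > 0)"

definition neg_def :: "complex^'n^'n \<Rightarrow> bool" where
  "neg_def A \<longleftrightarrow> (\<forall>x. x \<noteq> 0 \<longrightarrow>
     Im (bil (vconj x) (A *v x)) = 0 \<and> Re (bil (vconj x) (A *v x)) < 0)"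

definition dxi :: "nat \<Rightarrow> ((nat \<Rightarrow> real) \<Rightarrow> (nat \<Rightarrow> real) \<Rightarrow> 'a::real_normed_vector)
                     \<Rightarrow> (nat \<Rightarrow> real) \<Rightarrow> (nat \<Rightarrow> real) \<Rightarrow> 'a" where
  "dxi n F xi eta = vector_derivative (\<lambda>t. F (xi(n := t)) eta) (at (xi n))"

definition deta :: "nat \<Rightarrow> ((nat \<Rightarrow> real) \<Rightarrow> (nat \<Rightarrow> real) \<Rightarrow> 'a::real_normed_vector)
                     \<Rightarrow> (nat \<Rightarrow> real) \<Rightarrow> (nat \<Rightarrow> real) \<Rightarrow> 'a" where
  "deta n F xi eta = vector_derivative (\<lambda>t. F xi (eta(n := t))) (at (eta n))"

definition pdiff :: "nat \<Rightarrow> ((nat \<Rightarrow> real) \<Rightarrow> (nat \<Rightarrow> real) \<Rightarrow> 'a::real_normed_vector)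
                     \<Rightarrow> (nat \<Rightarrow> real) \<Rightarrow> (nat \<Rightarrow> real) \<Rightarrow> bool" where
  "pdiff n F xi eta \<longleftrightarrow> (\<lambda>t. F (xi(n := t)) eta) differentiable (at (xi n))
                       \<and> (\<lambda>t. F xi (eta(n := t))) differentiable (at (eta n))"

definition dz :: "nat \<Rightarrow> ((nat \<Rightarrow> real) \<Rightarrow> (nat \<Rightarrow> real) \<Rightarrow> complex^'m^'n)
                     \<Rightarrow> (nat \<Rightarrow> real) \<Rightarrow> (nat \<Rightarrow> real) \<Rightarrow> complex^'m^'n" where
  "dz n F xi eta = msmult (1/2) (dxi n F xi eta - msmult \<i> (deta n F xi eta))"

definition dzb :: "nat \<Rightarrow> ((nat \<Rightarrow> real) \<Rightarrow> (nat \<Rightarrow> real) \<Rightarrow> complex^'m^'n)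
                     \<Rightarrow> (nat \<Rightarrow> real) \<Rightarrow> (nat \<Rightarrow> real) \<Rightarrow> complex^'m^'n" where
  "dzb n F xi eta = msmult (1/2) (dxi n F xi eta + msmult \<i> (deta n F xi eta))"

definition s1_val :: "complex^'n^'n \<Rightarrow> complex^'n \<Rightarrow> complex^'n \<Rightarrow> complex^'n^'n \<Rightarrow> complex" where
  "s1_val K r s M = bil (vconj s) ((matrix_inv (mconj K) ** matrix_inv (mat 1 - mconj M ** M)
                        ** mconj M ** matrix_inv K) *v r)"

definition s3_val :: "complex^'n^'n \<Rightarrow> complex^'n \<Rightarrow> complex^'n \<Rightarrow> complex^'n^'n \<Rightarrow> complex" where
  "s3_val K r s M = bil s ((matrix_inv (mat 1 - M ** mconj M) ** matrix_inv K) *v r)"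

definition s4_val :: "complex^'n^'n \<Rightarrow> complex^'n \<Rightarrow> complex^'n \<Rightarrow> complex^'n^'n \<Rightarrow> complex" where
  "s4_val K r s M = bil s ((M ** matrix_inv (mat 1 - mconj M ** M)) *v vconj r)"

definition vmat :: "complex^'n^'n \<Rightarrow> complex^'n \<Rightarrow> complex^'n \<Rightarrow> complex^'n^'n \<Rightarrow> complex^2^2" where
  "vmat K r s M = vector [vector [1 - s1_val K r s M, - cnj (s3_val K r s M)],
                          vector [- s3_val K r s M, 1 - s4_val K r s M]]"

end

theory Submission
  imports Defs "HOL-Computational_Algebra.Fundamental_Theorem_Algebra"
begin

text \<open>Doubling the system by the conjugate data turns the Sylvester equation for \<open>M\<close> into one
  displacement equation \<open>(1 - \<M>) \<K> - \<K> (1 - \<M>) = \<R> \<S>\<close>, and \<open>v = \<sigma>\<^sub>3 J \<sigma>\<^sub>3\<close> with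
  \<open>J = 1 + \<S> G \<K>\<^sup>-\<^sup>1 \<R>\<close>, \<open>G = (1 - \<M>)\<^sup>-\<^sup>1\<close>.  The displacement equation gives
  \<open>J\<^sup>-\<^sup>1 = 1 - \<S> \<K>\<^sup>-\<^sup>1 G \<R>\<close>, Sylvester's identity \<open>det (1 + A B) = det (1 + B A)\<close> gives
  \<open>det J = 1\<close>, and conjugation, which swaps the two halves, gives \<open>J\<^sup>* = E J\<^sup>-\<^sup>1 E\<^sup>-\<^sup>1\<close>.  For a
  \<open>2 \<times> 2\<close> matrix of determinant one this says that \<open>J\<close>, hence \<open>v\<close>, is Hermitian, and a Hermitian
  \<open>2 \<times> 2\<close> matrix of determinant one is definite.

  Since \<open>K\<close> and \<open>-(K\<^sup>*)\<^sup>-\<^sup>1\<close> share no eigenvalue, \<open>M\<close> depends linearly on \<open>r s\<^sup>\<dagger>\<close>, so every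
  flow acts through a block-diagonal generator \<open>D\<close> commuting with \<open>\<K>\<close>:
  \<open>\<R>' = D \<R>\<close>, \<open>\<S>' = \<S> D\<close>, \<open>\<M>' = D \<M> + \<M> D\<close>.  Hence
  \<open>v\<^sub>z v\<^sup>-\<^sup>1 = 2 \<sigma>\<^sub>3 \<S> G (\<K>\<^sub>z \<K>\<^sup>-\<^sup>1) G \<R> \<sigma>\<^sub>3\<close> for the Wirtinger combination \<open>\<K>\<^sub>z\<close> of the
  generators, and the derivative of \<open>\<S> G C G \<R>\<close> along \<open>D\<close> is symmetric in \<open>C\<close> and \<open>D\<close>.  As
  \<open>\<K>\<^sub>z(n+1) \<K>\<^sup>-\<^sup>1 = \<K>\<^sub>z(n)\<close> and \<open>\<K>\<^sub>z\<^sub>b(n) \<K>\<^sup>-\<^sup>1 = -\<K>\<^sub>z\<^sub>b(n+1)\<close>, the two terms of the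
  Yang--Mills equation cancel.\<close>

section \<open>Matrix algebra\<close>

lemma matrix_add_rdistrib: "((A::'a::semiring_1^'n^'m) + B) ** C = A ** C + B ** C"
  by (vector matrix_matrix_mult_def sum.distrib[symmetric] field_simps)

lemma matrix_diff_ldistrib: "(A::'a::ring_1^'n^'m) ** (B - C) = A ** B - A ** C"
  by (vector matrix_matrix_mult_def sum_subtractf[symmetric] field_simps)

lemma matrix_diff_rdistrib: "((A::'a::ring_1^'n^'m) - B) ** C = A ** C - B ** C"
  by (vector matrix_matrix_mult_def sum_subtractf[symmetric] field_simps)

lemma matrix_mul_uminus_left: "(- (A::'a::ring_1^'n^'m)) ** B = - (A ** B)"
  by (vector matrix_matrix_mult_def sum_negf[symmetric])

lemma matrix_mul_uminus_right: "(A::'a::ring_1^'n^'m) ** (- B) = - (A ** B)"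
  by (vector matrix_matrix_mult_def sum_negf[symmetric])

lemmas matrix_ring_distribs =
  matrix_add_ldistrib matrix_add_rdistrib matrix_diff_ldistrib matrix_diff_rdistrib
  matrix_mul_uminus_left matrix_mul_uminus_right

lemma matrix_vector_mult_uminus_left: "(- (A::'a::ring_1^'n^'m)) *v x = - (A *v x)"
  using matrix_vector_mult_diff_rdistrib[of 0 A x] by simp

lemma vector_matrix_mult_uminus_left: "(- x) v* (A::'a::ring_1^'n^'m) = - (x v* A)"
  by (simp add: vector_matrix_mult_def vec_eq_iff sum_negf)

lemma vector_matrix_mult_uminus_right: "x v* (- (A::'a::ring_1^'n^'m)) = - (x v* A)"
  by (simp add: vector_matrix_mult_def vec_eq_iff sum_negf)

lemma mat_add: "mat (a + b) = (mat a + mat b :: 'a::monoid_add^'n^'n)"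
  by (vector mat_def)

lemma mat_mult_vector: "mat (c::'a::semiring_1) *v x = c *s x"
  by (simp add: vec_eq_iff matrix_vector_mult_def mat_def if_distrib if_distribR
      sum.delta cong: if_cong)

lemma matrix_vector_mult_sum:
  "(\<Sum>i\<in>S. B i) *v (w::'a::comm_semiring_1^'n) = (\<Sum>i\<in>S. B i *v w)"
  by (induction S rule: infinite_finite_induct) (auto simp: matrix_vector_mult_add_rdistrib)

lemma mat_matrix_mul: "mat (c::complex) ** A = msmult c A"
  by (simp add: msmult_def vec_eq_iff matrix_matrix_mult_def mat_def if_distrib if_distribR
      sum.delta cong: if_cong)

lemma matrix_mul_mat: "(A::complex^'n^'m) ** mat c = msmult c A"
  by (simp add: msmult_def vec_eq_iff matrix_matrix_mult_def mat_def if_distrib if_distribR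
      sum.delta' mult.commute cong: if_cong)

lemma msmult_matrix_mul_left: "msmult c (A ** B) = msmult c A ** B"
  by (simp add: msmult_def vec_eq_iff matrix_matrix_mult_def sum_distrib_left mult.assoc)

lemma msmult_matrix_mul_right: "msmult c (A ** B) = A ** msmult c B"
  by (simp add: msmult_def vec_eq_iff matrix_matrix_mult_def sum_distrib_left mult.left_commute)

lemma msmult_add: "msmult c (A + B) = msmult c A + msmult c B"
  by (simp add: msmult_def vec_eq_iff algebra_simps)

lemma msmult_diff: "msmult c (A - B) = msmult c A - msmult c B"
  by (simp add: msmult_def vec_eq_iff algebra_simps)

lemma msmult_uminus: "msmult (- c) A = - msmult c A"
  by (simp add: msmult_def vec_eq_iff)

lemma msmult_1 [simp]: "msmult 1 A = A"
  by (simp add: msmult_def vec_eq_iff)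

lemma msmult_0 [simp]: "msmult 0 A = 0" "msmult c 0 = 0"
  by (simp_all add: msmult_def vec_eq_iff)

lemma msmult_mult_vector: "msmult c A *v x = c *s (A *v x)"
  by (simp add: msmult_def vec_eq_iff matrix_vector_mult_def sum_distrib_left mult.assoc)

lemma msmult_mat: "msmult c (mat a) = mat (c * a)"
  by (simp add: msmult_def vec_eq_iff mat_def)

lemma mpow_0 [simp]: "mpow A 0 = mat 1"
  by (simp add: mpow_def)

lemma mpow_Suc: "mpow A (Suc k) = A ** mpow A k"
  by (simp add: mpow_def)

lemma mpow_commute:
  assumes "A ** B = B ** A"
  shows "mpow A k ** B = B ** mpow A k"
proof (induction k)
  case (Suc k)
  have "mpow A (Suc k) ** B = A ** (mpow A k ** B)" by (simp add: mpow_Suc matrix_mul_assoc)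
  also have "\<dots> = A ** B ** mpow A k" using Suc by (simp add: matrix_mul_assoc)
  finally show ?case using assms by (simp add: mpow_Suc matrix_mul_assoc)
qed simp

lemma mpow_Suc_right: "mpow A (Suc k) = mpow A k ** A"
  by (simp add: mpow_Suc mpow_commute)

lemma mconj_mconj [simp]: "mconj (mconj A) = A"
  by (simp add: mconj_def vec_eq_iff)

lemma mconj_mat [simp]: "mconj (mat c) = mat (cnj c)"
  by (simp add: mconj_def mat_def vec_eq_iff)

lemma mconj_zero [simp]: "mconj 0 = 0"
  by (simp add: mconj_def vec_eq_iff)

lemma mconj_mult: "mconj (A ** B) = mconj A ** mconj B"
  by (simp add: mconj_def matrix_matrix_mult_def vec_eq_iff)

lemma mconj_add: "mconj (A + B) = mconj A + mconj B"
  by (simp add: mconj_def vec_eq_iff)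

lemma mconj_diff: "mconj (A - B) = mconj A - mconj B"
  by (simp add: mconj_def vec_eq_iff)

lemma mconj_uminus: "mconj (- A) = - mconj A"
  by (simp add: mconj_def vec_eq_iff)

lemma mconj_msmult: "mconj (msmult c A) = msmult (cnj c) (mconj A)"
  by (simp add: mconj_def msmult_def vec_eq_iff)

lemma mconj_mpow: "mconj (mpow A k) = mpow (mconj A) k"
  by (induction k) (simp_all add: mpow_Suc mconj_mult)

lemma vconj_vconj [simp]: "vconj (vconj x) = x"
  by (simp add: vconj_def vec_eq_iff)

lemma vconj_matrix_vector_mult: "vconj (A *v x) = mconj A *v vconj x"
  by (simp add: vconj_def mconj_def matrix_vector_mult_def vec_eq_iff)

lemma vconj_vector_matrix_mult: "vconj (x v* A) = vconj x v* mconj A"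
  by (simp add: vconj_def mconj_def vector_matrix_mult_def vec_eq_iff)

lemma transpose_add: "transpose (A + B) = transpose A + transpose (B::'a::monoid_add^'n^'m)"
  by (simp add: transpose_def vec_eq_iff)

lemma transpose_diff: "transpose (A - B) = transpose A - transpose (B::'a::ab_group_add^'n^'m)"
  by (simp add: transpose_def vec_eq_iff)

lemma transpose_msmult: "transpose (msmult c A) = msmult c (transpose A)"
  by (simp add: transpose_def msmult_def vec_eq_iff)

lemma transpose_mpow: "transpose (mpow A k) = mpow (transpose A) k"
proof (induction k)
  case (Suc k)
  have "transpose (mpow A (Suc k)) = mpow (transpose A) k ** transpose A"
    using Suc by (simp add: mpow_Suc matrix_transpose_mul)
  then show ?case by (simp add: mpow_Suc_right)
qed simp

lemma outer_vector_matrix_mult: "outer x (y v* A) = outer x y ** A"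
  by (simp add: outer_def vector_matrix_mult_def matrix_matrix_mult_def vec_eq_iff sum_distrib_left
      mult.assoc)

lemma matrix_mul_outer: "A ** outer x y = outer (A *v x) y"
  by (simp add: outer_def matrix_vector_mult_def matrix_matrix_mult_def vec_eq_iff sum_distrib_right
      mult.assoc)

lemma mconj_outer: "mconj (outer x y) = outer (vconj x) (vconj y)"
  by (simp add: outer_def mconj_def vconj_def vec_eq_iff)

lemma bil_vector_matrix_mult: "bil (x v* A) y = bil x (A *v y)"
  by (simp add: bil_def vector_matrix_mult_def matrix_vector_mult_def sum_distrib_left
      sum_distrib_right mult_ac) (rule sum.swap)

section \<open>Polynomials of a matrix and the Sylvester equation\<close>

definition poly_mat :: "complex poly \<Rightarrow> complex^'n^'n \<Rightarrow> complex^'n^'n" where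
  "poly_mat p A = fold_coeffs (\<lambda>a B. mat a + A ** B) p 0"

lemma poly_mat_0 [simp]: "poly_mat 0 A = 0"
  by (simp add: poly_mat_def)

lemma poly_mat_pCons [simp]: "poly_mat (pCons a p) A = mat a + A ** poly_mat p A"
  by (cases "p = 0 \<and> a = 0") (auto simp: poly_mat_def)

lemma poly_mat_add: "poly_mat (p + q) A = poly_mat p A + poly_mat q A"
proof (induction p arbitrary: q)
  case (pCons a p)
  then show ?case by (cases q) (simp add: matrix_add_ldistrib mat_add algebra_simps)
qed simp

lemma poly_mat_smult: "poly_mat (smult c p) A = msmult c (poly_mat p A)"
  by (induction p) (simp_all add: msmult_add msmult_mat msmult_matrix_mul_right)

lemma poly_mat_mult: "poly_mat (p * q) A = poly_mat p A ** poly_mat q A"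
  by (induction p)
    (simp_all add: poly_mat_add poly_mat_smult matrix_add_rdistrib mat_matrix_mul matrix_mul_assoc)

lemma poly_mat_monom: "poly_mat (monom c k) A = msmult c (mpow A k)"
proof (induction k)
  case 0 then show ?case by (simp add: monom_0 msmult_mat)
next
  case (Suc k)
  have "poly_mat (monom c (Suc k)) A = A ** poly_mat (monom c k) A"
    by (simp only: monom_Suc poly_mat_pCons mat_0 add_0_left)
  then show ?case using Suc by (simp add: mpow_Suc msmult_matrix_mul_right)
qed

lemma poly_mat_sum: "poly_mat (\<Sum>i\<in>S. f i) A = (\<Sum>i\<in>S. poly_mat (f i) A)"
  by (induction S rule: infinite_finite_induct) (auto simp: poly_mat_add)

lemma poly_mat_linear: "poly_mat [:-m, 1:] A = A - mat m"
proof -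
  have "poly_mat [:-m, 1:] A = mat (-m) + A" by simp
  then show ?thesis by (simp add: vec_eq_iff mat_def)
qed

text \<open>The \<open>N + 1\<close> Krylov vectors \<open>P\<^sup>i w\<close>, \<open>i \<le> N\<close>, are linearly dependent.\<close>

lemma poly_mat_annihilates_vector:
  fixes P :: "complex^'n^'n"
  shows "\<exists>p. p \<noteq> 0 \<and> poly_mat p P *v w = 0"
proof (cases "inj_on (\<lambda>i. mpow P i *v w) {0..CARD('n)}")
  case False
  then obtain i j where ij: "i \<noteq> j" "mpow P i *v w = mpow P j *v w"
    unfolding inj_on_def by blast
  define p where "p = monom (1::complex) i + monom (-1) j"
  have "coeff p i = 1" using ij by (simp add: p_def coeff_monom)
  then have "p \<noteq> 0" by auto
  moreover have "poly_mat p P *v w = 0"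
    using ij by (simp add: p_def poly_mat_add poly_mat_monom matrix_vector_mult_add_rdistrib
        msmult_mult_vector)
  ultimately show ?thesis by blast
next
  case True
  let ?vs = "\<lambda>i. mpow P i *v w"
  let ?S = "?vs ` {0..CARD('n)}"
  have "\<not> vec.independent ?S"
  proof
    assume "vec.independent ?S"
    then have "card ?S \<le> vec.dim (UNIV :: (complex^'n) set)"
      by (intro vec.independent_card_le_dim) auto
    also have "\<dots> = CARD('n)"
      by (simp add: vec.dim_UNIV card_cart_basis)
    finally show False using True by (simp add: card_image)
  qed
  then obtain u v0 where uv: "v0 \<in> ?S" "u v0 \<noteq> 0" "(\<Sum>v\<in>?S. u v *s v) = 0"
    using vec.dependent_finite[of ?S] by auto
  then obtain i0 where i0: "i0 \<in> {0..CARD('n)}" "v0 = ?vs i0" by blast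
  have sum0: "(\<Sum>i\<in>{0..CARD('n)}. u (?vs i) *s ?vs i) = 0"
    using uv(3) by (simp add: sum.reindex[OF True])
  define p where "p = (\<Sum>i\<in>{0..CARD('n)}. monom (u (?vs i)) i)"
  have "coeff p i0 = u (?vs i0)"
    using i0 by (simp add: p_def coeff_sum coeff_monom)
  then have "p \<noteq> 0" using uv i0 by auto
  moreover have "poly_mat p P *v w = 0"
    using sum0 by (simp add: p_def poly_mat_sum poly_mat_monom matrix_vector_mult_sum
        msmult_mult_vector)
  ultimately show ?thesis by blast
qed

lemma eq_0_if_not_eigenvalue:
  assumes "\<not> is_eigenvalue A \<mu>" "(A - mat \<mu>) *v w = 0"
  shows "w = 0"
  using assms by (auto simp: is_eigenvalue_def matrix_vector_mult_diff_rdistrib mat_mult_vector)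

text \<open>Splitting off a factor \<open>x - \<mu>\<close> of \<open>p\<close> on the side where \<open>P - \<mu>\<close>, resp.\ \<open>K - \<mu>\<close>, is
  injective (\<open>\<mu>\<close> is not an eigenvalue of both) reduces the claim to the cofactor.\<close>

lemma intertwiner_kills_annihilated_vector_step:
  fixes K P X :: "complex^'n^'n"
  assumes KX: "K ** X = X ** P"
    and spec: "\<not> (\<exists>\<mu>. is_eigenvalue K \<mu> \<and> is_eigenvalue P \<mu>)"
    and IH: "\<And>w. poly_mat q P *v w = 0 \<Longrightarrow> X *v w = 0"
    and w: "poly_mat ([:-\<mu>, 1:] * q) P *v w = 0"
  shows "X *v w = 0"
proof (cases "is_eigenvalue P \<mu>")
  case True
  with spec have nK: "\<not> is_eigenvalue K \<mu>" by blast
  have "poly_mat ([:-\<mu>, 1:] * q) P = poly_mat q P ** (P - mat \<mu>)"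
    by (simp only: mult.commute[of _ q] poly_mat_mult poly_mat_linear)
  then have "poly_mat q P *v ((P - mat \<mu>) *v w) = 0"
    using w by (simp add: matrix_vector_mul_assoc)
  then have "X *v ((P - mat \<mu>) *v w) = 0"
    by (rule IH)
  moreover have "X ** (P - mat \<mu>) = (K - mat \<mu>) ** X"
    by (simp only: matrix_diff_ldistrib matrix_diff_rdistrib KX mat_matrix_mul matrix_mul_mat)
  ultimately have "(K - mat \<mu>) *v (X *v w) = 0"
    by (simp add: matrix_vector_mul_assoc)
  then show ?thesis by (rule eq_0_if_not_eigenvalue[OF nK])
next
  case False
  have "poly_mat ([:-\<mu>, 1:] * q) P = (P - mat \<mu>) ** poly_mat q P"
    by (simp only: poly_mat_mult poly_mat_linear)
  then have "(P - mat \<mu>) *v (poly_mat q P *v w) = 0"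
    using w by (simp add: matrix_vector_mul_assoc)
  then show ?thesis using IH eq_0_if_not_eigenvalue[OF False] by blast
qed

lemma intertwiner_kills_annihilated_vector:
  fixes K P X :: "complex^'n^'n"
  assumes KX: "K ** X = X ** P"
    and spec: "\<not> (\<exists>\<mu>. is_eigenvalue K \<mu> \<and> is_eigenvalue P \<mu>)"
  shows "p \<noteq> 0 \<Longrightarrow> poly_mat p P *v w = 0 \<Longrightarrow> X *v w = 0"
proof (induction "degree p" arbitrary: p w rule: less_induct)
  case less
  show ?case
  proof (cases "degree p = 0")
    case True
    then obtain c where "p = pCons c 0" by (rule degree_eq_zeroE)
    with less.prems have "c \<noteq> 0" "c *s w = 0" by (auto simp: mat_mult_vector)
    then have "w = 0" by (simp add: vec_eq_iff)
    then show ?thesis by simp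
  next
    case False
    then have "\<not> constant (poly p)" by (simp add: constant_degree)
    then obtain \<mu> where "poly p \<mu> = 0" using fundamental_theorem_of_algebra by blast
    then obtain q where pq: "p = [:-\<mu>, 1:] * q" by (auto simp: poly_eq_0_iff_dvd elim: dvdE)
    with less.prems have "q \<noteq> 0" by auto
    moreover have "degree q < degree p"
      using pq \<open>q \<noteq> 0\<close> by (simp add: degree_mult_eq del: mult_pCons_left)
    ultimately show ?thesis
      using intertwiner_kills_annihilated_vector_step[OF KX spec] less pq by blast
  qed
qed

lemma intertwiner_eq_0:
  fixes K P X :: "complex^'n^'n"
  assumes "K ** X = X ** P"
    and "\<not> (\<exists>\<mu>. is_eigenvalue K \<mu> \<and> is_eigenvalue P \<mu>)"
  shows "X = 0"
proof -
  have "X *v w = 0" for w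
    using poly_mat_annihilates_vector[of P w] intertwiner_kills_annihilated_vector[OF assms]
    by blast
  then show ?thesis by (simp add: matrix_eq)
qed

section \<open>Inverse matrices\<close>

lemma matrix_inv_right: "invertible A \<Longrightarrow> A ** matrix_inv A = mat 1"
  unfolding matrix_inv_def invertible_def by (rule someI2_ex) auto

lemma matrix_inv_left: "invertible A \<Longrightarrow> matrix_inv A ** A = mat 1"
  unfolding matrix_inv_def invertible_def by (rule someI2_ex) auto

lemma matrix_inv_unique:
  fixes A B :: "'a::field^'n^'n"
  assumes "A ** B = mat 1"
  shows "matrix_inv A = B"
proof -
  have "invertible A" using assms invertible_right_inverse by blast
  then have "matrix_inv A = matrix_inv A ** (A ** B)" using assms by simp
  also have "\<dots> = B" using matrix_inv_left[OF \<open>invertible A\<close>] by (simp add: matrix_mul_assoc)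
  finally show ?thesis .
qed

lemma matrix_inv_unique_left:
  fixes A B :: "'a::field^'n^'n"
  shows "B ** A = mat 1 \<Longrightarrow> matrix_inv A = B"
  using matrix_left_right_inverse matrix_inv_unique by blast

lemma matrix_inv_commute:
  fixes A B :: "'a::field^'n^'n"
  assumes "A ** B = B ** A" "invertible B"
  shows "A ** matrix_inv B = matrix_inv B ** A"
proof -
  have "A ** matrix_inv B = matrix_inv B ** (B ** A) ** matrix_inv B"
    using matrix_inv_left[OF assms(2)] by (simp add: matrix_mul_assoc)
  also have "\<dots> = matrix_inv B ** (A ** B) ** matrix_inv B" using assms(1) by simp
  also have "\<dots> = matrix_inv B ** A"
    using matrix_inv_right[OF assms(2)] by (simp add: matrix_mul_assoc[symmetric])
  finally show ?thesis .
qed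

lemma matrix_inv_transpose:
  fixes K :: "'a::field^'n^'n"
  assumes "invertible K"
  shows "matrix_inv (transpose K) = transpose (matrix_inv K)"
  by (rule matrix_inv_unique)
    (use matrix_inv_left[OF assms] in \<open>simp flip: matrix_transpose_mul\<close>)

lemma invertible_mconj:
  fixes A :: "complex^'n^'n"
  assumes "invertible A"
  shows "invertible (mconj A)" "matrix_inv (mconj A) = mconj (matrix_inv A)"
proof -
  have "mconj A ** mconj (matrix_inv A) = mat 1"
    using matrix_inv_right[OF assms] by (simp flip: mconj_mult)
  then show "invertible (mconj A)" "matrix_inv (mconj A) = mconj (matrix_inv A)"
    using invertible_right_inverse matrix_inv_unique by blast+
qed

lemma matrix_inv_cramer:
  fixes A :: "'a::field^'n^'n"
  assumes "invertible A"
  shows "matrix_inv A $ i $ j =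
    det (\<chi> k l. if l = i then (if k = j then 1 else 0) else A $ k $ l) / det A"
proof -
  let ?b = "(\<chi> k. if k = j then 1 else 0) :: 'a^'n"
  let ?x = "matrix_inv A *v ?b"
  have "det A \<noteq> 0" using assms invertible_det_nz by blast
  moreover have "A *v ?x = ?b"
    using matrix_inv_right[OF assms] by (simp add: matrix_vector_mul_assoc)
  ultimately have "?x = (\<chi> k. det (\<chi> i j. if j = k then ?b $ i else A $ i $ j) / det A)"
    using cramer by blast
  then have "?x $ i = det (\<chi> k l. if l = i then ?b $ k else A $ k $ l) / det A" by simp
  moreover have "(\<chi> k l. if l = i then ?b $ k else A $ k $ l)
      = (\<chi> k l. if l = i then (if k = j then 1 else 0) else A $ k $ l)"
    by (simp add: vec_eq_iff)
  moreover have "?x $ i = matrix_inv A $ i $ j"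
    by (simp add: matrix_vector_mult_def if_distrib if_distribR sum.delta' cong: if_cong)
  ultimately show ?thesis by simp
qed

section \<open>Derivatives of matrix-valued functions of one real variable\<close>

lemma bounded_bilinear_matrix_mul:
  "bounded_bilinear (\<lambda>(A::complex^'n^'m) (B::complex^'p^'n). A ** B)"
proof -
  have "bilinear (\<lambda>(A::complex^'n^'m) (B::complex^'p^'n). A ** B)"
    unfolding bilinear_def
    by (auto intro!: linearI simp: matrix_add_ldistrib matrix_add_rdistrib matrix_scalar_ac
        scalar_matrix_assoc[symmetric])
  then show ?thesis by (simp add: bilinear_conv_bounded_bilinear)
qed

lemma has_vector_derivative_matrix_mul:
  fixes F :: "real \<Rightarrow> complex^'n^'m" and H :: "real \<Rightarrow> complex^'p^'n"
  assumes "(F has_vector_derivative F') (at t)" "(H has_vector_derivative H') (at t)"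
  shows "((\<lambda>x. F x ** H x) has_vector_derivative (F t ** H' + F' ** H t)) (at t)"
  by (rule bounded_bilinear.has_vector_derivative[OF bounded_bilinear_matrix_mul assms])

lemma bounded_linear_matrix_mul_right:
  "bounded_linear (\<lambda>X::complex^'n^'m. X ** (B::complex^'p^'n))"
  by (rule bounded_bilinear.bounded_linear_left[OF bounded_bilinear_matrix_mul])

lemma bounded_bilinear_outer: "bounded_bilinear (outer :: complex^'n \<Rightarrow> complex^'n \<Rightarrow> _)"
proof -
  have "bilinear (outer :: complex^'n \<Rightarrow> complex^'n \<Rightarrow> complex^'n^'n)"
    unfolding bilinear_def by (auto intro!: linearI simp: outer_def vec_eq_iff algebra_simps)
  then show ?thesis by (simp add: bilinear_conv_bounded_bilinear)
qed

lemma bounded_linear_mconj: "bounded_linear (mconj :: complex^'m^'n \<Rightarrow> complex^'m^'n)"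
proof -
  have "linear (mconj :: complex^'m^'n \<Rightarrow> complex^'m^'n)"
    by (auto intro!: linearI simp: mconj_def vec_eq_iff)
  then show ?thesis by (simp add: linear_conv_bounded_linear)
qed

lemma bounded_linear_vconj: "bounded_linear (vconj :: complex^'n \<Rightarrow> complex^'n)"
proof -
  have "linear (vconj :: complex^'n \<Rightarrow> complex^'n)"
    by (auto intro!: linearI simp: vconj_def vec_eq_iff)
  then show ?thesis by (simp add: linear_conv_bounded_linear)
qed

lemma has_vector_derivative_mconj:
  "(F has_vector_derivative F') (at t) \<Longrightarrow>
   ((\<lambda>x. mconj (F x)) has_vector_derivative mconj F') (at t)"
  by (rule bounded_linear.has_vector_derivative[OF bounded_linear_mconj])

lemma has_vector_derivative_vconj:
  "(F has_vector_derivative F') (at t) \<Longrightarrow>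
   ((\<lambda>x. vconj (F x)) has_vector_derivative vconj F') (at t)"
  by (rule bounded_linear.has_vector_derivative[OF bounded_linear_vconj])

lemma differentiable_matrix_entry:
  fixes F :: "real \<Rightarrow> complex^'n^'m"
  assumes "F differentiable (at t)"
  shows "(\<lambda>t. F t $ i $ j) differentiable (at t)"
proof -
  have "bounded_linear (\<lambda>A::complex^'n^'m. A $ i $ j)"
    using bounded_linear_compose[OF bounded_linear_vec_nth bounded_linear_vec_nth] by blast
  then show ?thesis
    using differentiable_chain_at[OF assms bounded_linear_imp_differentiable] by (simp add: o_def)
qed

lemma differentiable_matrix_if_entries:
  fixes F :: "real \<Rightarrow> complex^'n^'m"
  assumes "\<And>i j. (\<lambda>t. F t $ i $ j) differentiable (at t)"
  shows "F differentiable (at t)"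
proof -
  define E :: "'m \<Rightarrow> 'n \<Rightarrow> complex \<Rightarrow> complex^'n^'m" where "E i j z = (\<chi> a b. if a = i \<and> b = j then z else 0)"
    for i j z
  have "linear (E i j)" for i j
    by (auto intro!: linearI simp: E_def vec_eq_iff)
  then have "(\<lambda>t. E i j (F t $ i $ j)) differentiable (at t)" for i j
    using differentiable_chain_at[OF assms bounded_linear_imp_differentiable, of "E i j" i j]
    by (simp add: o_def linear_conv_bounded_linear)
  then have "(\<lambda>t. \<Sum>i\<in>UNIV. \<Sum>j\<in>UNIV. E i j (F t $ i $ j)) differentiable (at t)"
    by (simp add: differentiable_sum)
  moreover have "(\<Sum>i\<in>UNIV. \<Sum>j\<in>UNIV. E i j (A $ i $ j)) = A" for A :: "complex^'n^'m"
  proof -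
    have "(\<Sum>j\<in>UNIV. if a = i \<and> b = j then A $ i $ j else 0) = (if a = i then A $ i $ b else 0)"
      for a b i
      by (cases "a = i") (simp_all add: sum.delta)
    then show ?thesis by (simp add: vec_eq_iff sum_component E_def sum.delta)
  qed
  ultimately show ?thesis by simp
qed

lemma differentiable_prod_at:
  fixes f :: "'i \<Rightarrow> real \<Rightarrow> 'a::{real_normed_field}"
  shows "finite S \<Longrightarrow> (\<And>i. i \<in> S \<Longrightarrow> f i differentiable (at t)) \<Longrightarrow>
    (\<lambda>x. \<Prod>i\<in>S. f i x) differentiable (at t)"
  by (induction S rule: finite_induct) auto

lemma differentiable_det:
  fixes F :: "real \<Rightarrow> complex^'n^'n"
  assumes "\<And>i j. (\<lambda>t. F t $ i $ j) differentiable (at t)"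
  shows "(\<lambda>t. det (F t)) differentiable (at t)"
  unfolding det_def
  by (intro differentiable_sum ballI differentiable_mult differentiable_const
      differentiable_prod_at assms) (simp_all add: finite_permutations)

lemma continuous_det:
  fixes F :: "real \<Rightarrow> complex^'n^'n"
  assumes "continuous (at t) F"
  shows "continuous (at t) (\<lambda>t. det (F t))"
proof -
  have "bounded_linear (\<lambda>A::complex^'n^'n. A $ i $ j)" for i j
    using bounded_linear_compose[OF bounded_linear_vec_nth bounded_linear_vec_nth] by blast
  then have entries: "continuous (at t) (\<lambda>t. F t $ i $ j)" for i j
    using assms continuous_at_compose[of t F "\<lambda>A. A $ i $ j"]
    by (simp add: o_def linear_continuous_at)
  show ?thesis unfolding det_def by (intro continuous_intros entries)
qed

lemma eventually_invertible_nhds: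
  fixes F :: "real \<Rightarrow> complex^'n^'n"
  assumes "continuous (at t) F" "invertible (F t)"
  shows "\<forall>\<^sub>F s in nhds t. invertible (F s)"
proof -
  have "det (F t) \<noteq> 0" using assms(2) invertible_det_nz by blast
  then obtain e where "e > 0" "\<forall>s. dist t s < e \<longrightarrow> det (F s) \<noteq> 0"
    using continuous_at_avoid[OF continuous_det[OF assms(1)]] by blast
  then show ?thesis
    unfolding eventually_nhds_metric by (metis dist_commute invertible_det_nz)
qed

lemma has_vector_derivative_eventually_eq:
  assumes "(g has_vector_derivative g') (at t)" "\<forall>\<^sub>F s in nhds t. f s = g s"
  shows "(f has_vector_derivative g') (at t)"
  using has_vector_derivative_cong_ev[where f=f and g=g and S=UNIV] assms eventually_nhds_x_imp_x[OF assms(2)]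
  by simp

text \<open>Differentiability of the inverse comes from Cramer's rule; the value of the derivative
  then follows by differentiating \<open>F\<^sup>-\<^sup>1 F = 1\<close>.\<close>

lemma has_vector_derivative_matrix_inv:
  fixes F :: "real \<Rightarrow> complex^'n^'n"
  assumes F: "(F has_vector_derivative F') (at t)" and inv: "invertible (F t)"
  shows "((\<lambda>s. matrix_inv (F s)) has_vector_derivative
           - (matrix_inv (F t) ** F' ** matrix_inv (F t))) (at t)"
proof -
  have Fd: "F differentiable (at t)" using F differentiableI_vector by blast
  have ev: "\<forall>\<^sub>F s in nhds t. invertible (F s)"
    using eventually_invertible_nhds[OF differentiable_imp_continuous_within[OF Fd] inv] .
  define C :: "real \<Rightarrow> complex^'n^'n" where
    "C s = (\<chi> i j. det (\<chi> k l. if l = i then (if k = j then 1 else 0) else F s $ k $ l) / det (F s))"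
    for s
  have inv_C: "\<forall>\<^sub>F s in nhds t. matrix_inv (F s) = C s"
    using ev by eventually_elim (simp add: C_def vec_eq_iff matrix_inv_cramer)
  have entries: "(\<lambda>s. F s $ i $ j) differentiable (at t)" for i j
    by (rule differentiable_matrix_entry[OF Fd])
  have if_entries: "(\<lambda>s. if c then a else F s $ k $ l) differentiable (at t)" for c a k l
    by (cases c) (simp_all add: entries)
  have "det (F t) \<noteq> 0" using inv invertible_det_nz by blast
  then have "(\<lambda>s. C s $ i $ j) differentiable (at t)" for i j
    unfolding C_def
    by (auto intro!: differentiable_divide differentiable_det entries if_entries)
  then obtain C' where "(C has_vector_derivative C') (at t)"
    using differentiable_matrix_if_entries vector_derivative_works by blast
  then have C': "((\<lambda>s. matrix_inv (F s)) has_vector_derivative C') (at t)"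
    using inv_C by (rule has_vector_derivative_eventually_eq)
  have "((\<lambda>s. matrix_inv (F s) ** F s) has_vector_derivative
          (matrix_inv (F t) ** F' + C' ** F t)) (at t)"
    by (rule has_vector_derivative_matrix_mul[OF C' F])
  moreover have "\<forall>\<^sub>F s in nhds t. matrix_inv (F s) ** F s = mat 1"
    using ev by eventually_elim (rule matrix_inv_left)
  then have "((\<lambda>s. matrix_inv (F s) ** F s) has_vector_derivative 0) (at t)"
    by (rule has_vector_derivative_eventually_eq[OF has_vector_derivative_const])
  ultimately have "matrix_inv (F t) ** F' + C' ** F t = 0"
    using vector_derivative_unique_at by blast
  then have "C' ** F t = - (matrix_inv (F t) ** F')"
    by (simp add: eq_neg_iff_add_eq_0 add.commute)
  then have "C' ** F t ** matrix_inv (F t) = - (matrix_inv (F t) ** F') ** matrix_inv (F t)"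
    by simp
  then have "C' = - (matrix_inv (F t) ** F' ** matrix_inv (F t))"
    using matrix_inv_right[OF inv] by (simp add: matrix_mul_assoc[symmetric] matrix_mul_uminus_left)
  then show ?thesis using C' by simp
qed

section \<open>Block matrices\<close>

lemma sum_UNIV_Plus:
  "(\<Sum>x\<in>(UNIV::('a::finite+'b::finite) set). f x) = (\<Sum>a\<in>UNIV. f (Inl a)) + (\<Sum>b\<in>UNIV. f (Inr b))"
  using sum.Plus[of "UNIV::'a set" "UNIV::'b set" f] by (simp add: o_def)

lemma prod_UNIV_Plus:
  "(\<Prod>x\<in>(UNIV::('a::finite+'b::finite) set). f x) = (\<Prod>a\<in>UNIV. f (Inl a)) * (\<Prod>b\<in>UNIV. f (Inr b))"
  using prod.Plus[of "UNIV::'a set" "UNIV::'b set" f] by (simp add: o_def)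

definition block :: "complex^'b^'a \<Rightarrow> complex^'d^'a \<Rightarrow> complex^'b^'c \<Rightarrow> complex^'d^'c
                    \<Rightarrow> complex^('b+'d)^('a+'c)" where
  "block A B C D = (\<chi> i j. case i of Inl a \<Rightarrow> (case j of Inl b \<Rightarrow> A$a$b | Inr d \<Rightarrow> B$a$d)
                                   | Inr c \<Rightarrow> (case j of Inl b \<Rightarrow> C$c$b | Inr d \<Rightarrow> D$c$d))"

definition col_block :: "complex^'k^'a \<Rightarrow> complex^'k^'c \<Rightarrow> complex^'k^('a+'c)" where
  "col_block U W = (\<chi> i k. case i of Inl a \<Rightarrow> U$a$k | Inr c \<Rightarrow> W$c$k)"

definition row_block :: "complex^'a^'k \<Rightarrow> complex^'c^'k \<Rightarrow> complex^('a+'c)^'k" where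
  "row_block X Y = (\<chi> k j. case j of Inl a \<Rightarrow> X$k$a | Inr c \<Rightarrow> Y$k$c)"

lemma block_nth [simp]:
  "block A B C D $ Inl a $ Inl b = A$a$b" "block A B C D $ Inl a $ Inr d = B$a$d"
  "block A B C D $ Inr c $ Inl b = C$c$b" "block A B C D $ Inr c $ Inr d = D$c$d"
  by (simp_all add: block_def)

lemma col_block_nth [simp]: "col_block U W $ Inl a $ k = U$a$k" "col_block U W $ Inr c $ k = W$c$k"
  by (simp_all add: col_block_def)

lemma row_block_nth [simp]: "row_block X Y $ k $ Inl a = X$k$a" "row_block X Y $ k $ Inr c = Y$k$c"
  by (simp_all add: row_block_def)

lemma block_eqI:
  assumes "\<And>a b. Z $ Inl a $ Inl b = A$a$b" "\<And>a d. Z $ Inl a $ Inr d = B$a$d"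
    "\<And>c b. Z $ Inr c $ Inl b = C$c$b" "\<And>c d. Z $ Inr c $ Inr d = D$c$d"
  shows "Z = block A B C D"
proof -
  have "Z $ i $ j = block A B C D $ i $ j" for i j
    by (cases i; cases j) (simp_all add: assms)
  then show ?thesis by (simp add: vec_eq_iff)
qed

lemma col_block_eqI:
  assumes "\<And>a k. Z $ Inl a $ k = U$a$k" "\<And>c k. Z $ Inr c $ k = W$c$k"
  shows "Z = col_block U W"
proof -
  have "Z $ i $ k = col_block U W $ i $ k" for i k by (cases i) (simp_all add: assms)
  then show ?thesis by (simp add: vec_eq_iff)
qed

lemma row_block_eqI:
  assumes "\<And>a k. Z $ k $ Inl a = X$k$a" "\<And>c k. Z $ k $ Inr c = Y$k$c"
  shows "Z = row_block X Y"
proof -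
  have "Z $ k $ j = row_block X Y $ k $ j" for j k by (cases j) (simp_all add: assms)
  then show ?thesis by (simp add: vec_eq_iff)
qed

lemma block_mult:
  "block A B C D ** block A' B' C' D' =
   block (A**A' + B**C') (A**B' + B**D') (C**A' + D**C') (C**B' + D**D')"
  by (rule block_eqI) (simp_all add: matrix_matrix_mult_def sum_UNIV_Plus)

lemma block_add: "block A B C D + block A' B' C' D' = block (A+A') (B+B') (C+C') (D+D')"
  by (rule block_eqI) simp_all

lemma block_diff: "block A B C D - block A' B' C' D' = block (A-A') (B-B') (C-C') (D-D')"
  by (rule block_eqI) simp_all

lemma block_uminus: "- block A B C D = block (-A) (-B) (-C) (-D)"
  by (rule block_eqI) simp_all

lemma block_mat_1: "(mat 1::complex^('a::finite+'c::finite)^('a+'c)) = block (mat 1) 0 0 (mat 1)"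
  by (rule block_eqI) (simp_all add: mat_def)

lemma block_mconj: "mconj (block A B C D) = block (mconj A) (mconj B) (mconj C) (mconj D)"
  by (rule block_eqI) (simp_all add: mconj_def)

lemma block_transpose:
  "transpose (block A B C D) = block (transpose A) (transpose C) (transpose B) (transpose D)"
  by (rule block_eqI) (simp_all add: transpose_def)

lemma block_col_block: "block A B C D ** col_block U W = col_block (A**U + B**W) (C**U + D**W)"
  by (rule col_block_eqI) (simp_all add: matrix_matrix_mult_def sum_UNIV_Plus)

lemma row_block_block: "row_block X Y ** block A B C D = row_block (X**A + Y**C) (X**B + Y**D)"
  by (rule row_block_eqI) (simp_all add: matrix_matrix_mult_def sum_UNIV_Plus)

lemma row_block_col_block: "row_block X Y ** col_block U W = X**U + Y**W"
  by (simp add: vec_eq_iff matrix_matrix_mult_def sum_UNIV_Plus)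

lemma col_block_row_block: "col_block U W ** row_block X Y = block (U**X) (U**Y) (W**X) (W**Y)"
  by (rule block_eqI) (simp_all add: matrix_matrix_mult_def)

lemma col_block_mult: "col_block U W ** Z = col_block (U**Z) (W**Z)"
  by (rule col_block_eqI) (simp_all add: matrix_matrix_mult_def)

lemma mult_row_block: "Z ** row_block X Y = row_block (Z**X) (Z**Y)"
  by (rule row_block_eqI) (simp_all add: matrix_matrix_mult_def)

lemma col_block_mconj: "mconj (col_block U W) = col_block (mconj U) (mconj W)"
  by (rule col_block_eqI) (simp_all add: mconj_def)

lemma row_block_mconj: "mconj (row_block X Y) = row_block (mconj X) (mconj Y)"
  by (rule row_block_eqI) (simp_all add: mconj_def)

lemma row_block_uminus: "- row_block X Y = row_block (-X) (-Y)"
  by (rule row_block_eqI) simp_all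

lemma map_sum_permutes:
  assumes "q permutes (UNIV :: 'a set)"
  shows "(map_sum q id :: 'a + 'b \<Rightarrow> _) permutes UNIV"
proof -
  have "map_sum q id \<circ> map_sum (inv q) id = (id :: 'a + 'b \<Rightarrow> _)"
    "map_sum (inv q) id \<circ> map_sum q id = (id :: 'a + 'b \<Rightarrow> _)"
    using permutes_inv_o[OF assms] by (simp_all add: map_sum.comp map_sum.id)
  then have "bij (map_sum q id :: 'a + 'b \<Rightarrow> _)" by (metis o_bij)
  then show ?thesis by (auto intro: bij_imp_permutes)
qed

lemma sign_map_sum:
  fixes q :: "'a::finite \<Rightarrow> 'a"
  assumes "q permutes UNIV"
  shows "sign (map_sum q id :: 'a + 'b::finite \<Rightarrow> _) = sign q"
  using assms finite_class.finite_UNIV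
proof (induction rule: permutes_induct)
  case id
  then show ?case by (simp add: id_def[symmetric] map_sum.id)
next
  case (swap a b p)
  let ?lift = "\<lambda>q. map_sum q id :: 'a + 'b \<Rightarrow> _"
  have "?lift (Transposition.transpose a b \<circ> p) = Transposition.transpose (Inl a) (Inl b) \<circ> ?lift p"
  proof
    fix x :: "'a + 'b"
    show "?lift (Transposition.transpose a b \<circ> p) x = (Transposition.transpose (Inl a) (Inl b) \<circ> ?lift p) x"
      by (cases x) (auto simp: Transposition.transpose_def)
  qed
  moreover have pp: "permutation p" and "permutation (?lift p)"
    using swap(4) map_sum_permutes[OF swap(4)] by (auto simp: permutation_permutes)
  ultimately have "sign (?lift (Transposition.transpose a b \<circ> p))
      = sign (Transposition.transpose (Inl a :: 'a + 'b) (Inl b)) * sign (?lift p)"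
    by (simp only: sign_compose[OF permutation_swap_id])
  also have "\<dots> = sign (Transposition.transpose a b) * sign p"
    using swap by (simp add: sign_swap_id id_def)
  also have "\<dots> = sign (Transposition.transpose a b \<circ> p)"
    by (rule sign_compose[OF permutation_swap_id pp, symmetric])
  finally show ?case .
qed

lemma permutes_fixing_Inr:
  assumes p: "p permutes (UNIV :: ('a::finite + 'b) set)" and Inr_fixed: "\<And>b. p (Inr b) = Inr b"
  obtains q where "q permutes (UNIV :: 'a set)" "p = map_sum q id"
proof -
  have "inj p" using p by (auto dest: permutes_inj)
  have "\<exists>a'. p (Inl a) = Inl a'" for a
  proof (cases "p (Inl a)")
    case (Inr b)
    then have "p (Inl a) = p (Inr b)" using Inr_fixed by simp
    then show ?thesis using \<open>inj p\<close> by (auto dest: injD)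
  qed simp
  then obtain q where q: "\<And>a. p (Inl a) = Inl (q a)" by metis
  have "p = map_sum q id"
  proof
    fix x :: "'a + 'b"
    show "p x = map_sum q id x" by (cases x) (simp_all add: q Inr_fixed)
  qed
  moreover have "inj q"
  proof (rule injI)
    fix x y
    assume "q x = q y"
    then have "p (Inl x) = p (Inl y)" by (simp add: q)
    then show "x = y" using \<open>inj p\<close> by (auto dest: injD)
  qed
  then have "q permutes UNIV"
    using finite_UNIV_inj_surj[of q] by (auto simp: bij_def intro: bij_imp_permutes)
  ultimately show ?thesis using that by blast
qed

lemma det_block_upper_mat_1:
  fixes D :: "complex^'a^'a" and C :: "complex^'b^'a"
  shows "det (block D C 0 (mat 1)) = det D"
proof -
  let ?T = "block D C 0 (mat 1)"
  let ?S1 = "{p. p permutes (UNIV :: ('a+'b) set)}"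
  let ?S0 = "{q. q permutes (UNIV :: 'a set)}"
  let ?lift = "\<lambda>q. map_sum q id :: 'a + 'b \<Rightarrow> _"
  let ?f = "\<lambda>p. of_int (sign p) * (\<Prod>i\<in>UNIV. ?T $ i $ p i)"
  have inj: "inj_on ?lift ?S0"
  proof (rule inj_onI)
    fix q1 q2 :: "'a \<Rightarrow> 'a"
    assume "?lift q1 = ?lift q2"
    then have "?lift q1 (Inl a) = ?lift q2 (Inl a)" for a
      by simp
    then show "q1 = q2" by auto
  qed
  have sub: "?lift ` ?S0 \<subseteq> ?S1" using map_sum_permutes by blast
  have zero: "?f p = 0" if p: "p \<in> ?S1 - ?lift ` ?S0" for p
  proof (rule ccontr)
    assume "?f p \<noteq> 0"
    then have nz: "\<And>i. ?T $ i $ p i \<noteq> 0" by auto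
    have "p (Inr b) = Inr b" for b
      using nz[of "Inr b"] by (cases "p (Inr b)") (simp_all add: mat_def split: if_splits)
    then show False using p permutes_fixing_Inr[of p] by blast
  qed
  have "det ?T = sum ?f ?S1" by (simp add: det_def)
  also have "\<dots> = sum ?f (?lift ` ?S0)"
    using zero by (intro sum.mono_neutral_right[OF _ sub]) (simp_all add: finite_permutations)
  also have "\<dots> = sum (?f \<circ> ?lift) ?S0"
    by (rule sum.reindex[OF inj])
  also have "\<dots> = (\<Sum>q\<in>?S0. of_int (sign q) * (\<Prod>i\<in>UNIV. D $ i $ q i))"
    by (intro sum.cong refl) (simp add: sign_map_sum prod_UNIV_Plus mat_def)
  also have "\<dots> = det D" by (simp add: det_def)
  finally show ?thesis .
qed

lemma det_block_lower_mat_1: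
  fixes D :: "complex^'a^'a" and C :: "complex^'a^'b"
  shows "det (block D 0 C (mat 1)) = det D"
proof -
  have "transpose (0::complex^'b^'a) = 0" by (simp add: transpose_def vec_eq_iff)
  then have "transpose (block D 0 C (mat 1)) = block (transpose D) (transpose C) 0 (mat 1)"
    by (simp only: block_transpose transpose_mat)
  then have "det (transpose (block D 0 C (mat 1))) = det (transpose D)"
    by (simp only: det_block_upper_mat_1)
  then show ?thesis by simp
qed

text \<open>Sylvester's determinant identity \<open>det (1 + A B) = det (1 + B A)\<close>; the right-hand side is
  padded with an identity block to make the two sides live in the same dimension.\<close>

lemma det_mat_1_add_mult:
  fixes A :: "complex^'m^'k" and B :: "complex^'k^'m"
  shows "det (mat 1 + A ** B) = det (block (mat 1 :: complex^'k^'k) 0 0 (mat 1 + B ** A))"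
proof -
  let ?L = "block (mat 1 :: complex^'k^'k) 0 B (mat 1)"
  let ?U1 = "block (mat 1 :: complex^'k^'k) (-A) 0 (mat 1 + B ** A)"
  let ?U2 = "block (mat 1 + A ** B) (-A) 0 (mat 1 :: complex^'m^'m)"
  have "?L ** ?U1 = ?U2 ** ?L"
    by (simp add: block_mult matrix_ring_distribs)
  then have "det ?L * det ?U1 = det ?U2 * det ?L" by (simp only: det_mul[symmetric])
  then have "det ?U1 = det ?U2"
    using det_block_lower_mat_1[of "mat 1" B] by simp
  moreover have "?U1 = block (mat 1 :: complex^'k^'k) 0 0 (mat 1 + B ** A) ** block (mat 1) (-A) 0 (mat 1)"
    by (simp add: block_mult)
  ultimately show ?thesis
    by (simp add: det_mul det_block_upper_mat_1)
qed

section \<open>Hermitian \<open>2 \<times> 2\<close> matrices of determinant one are definite\<close>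

lemma hermitian_2x2_quadratic_form:
  fixes v :: "complex^2^2" and x :: "complex^2"
  assumes "v$1$1 = of_real \<alpha>" "v$2$2 = of_real \<delta>" "v$1$2 = cnj c" "v$2$1 = c"
  shows "of_real \<alpha> * bil (vconj x) (v *v x)
    = of_real ((cmod (of_real \<alpha> * x$1 + cnj c * x$2))^2 + (\<alpha> * \<delta> - (cmod c)^2) * (cmod (x$2))^2)"
proof -
  have cmod_sq: "(complex_of_real (cmod z))^2 = z * cnj z" for z
    using complex_norm_square[of z] by simp
  show ?thesis
    by (simp add: assms bil_def vconj_def matrix_vector_mult_def sum_2 cmod_sq algebra_simps)
qed

lemma hermitian_det_1_definite:
  fixes v :: "complex^2^2"
  assumes herm: "adj v = v" and det: "det v = 1"
  shows "pos_def v \<or> neg_def v"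
proof -
  have h: "cnj (v $ j $ i) = v $ i $ j" for i j
    using arg_cong[OF herm, of "\<lambda>A. A $ i $ j"] by (simp add: adj_def mconj_def transpose_def)
  define \<alpha> where "\<alpha> = Re (v$1$1)"
  define \<delta> where "\<delta> = Re (v$2$2)"
  have diag: "v$1$1 = of_real \<alpha>" "v$2$2 = of_real \<delta>"
    using h[of 1 1] h[of 2 2] by (simp_all add: \<alpha>_def \<delta>_def complex_eq_iff)
  have off: "v$1$2 = cnj (v$2$1)" using h[of 1 2] h[of 2 1] by simp
  have "of_real (\<alpha> * \<delta> - (cmod (v$2$1))^2) = det v"
    using complex_norm_square[of "v$2$1"] by (simp add: det_2 diag off)
  then have det_real: "\<alpha> * \<delta> - (cmod (v$2$1))^2 = 1"
    using det of_real_eq_1_iff by metis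
  define R where "R x = (cmod (of_real \<alpha> * x$1 + cnj (v$2$1) * x$2))^2 + (cmod (x$2))^2"
    for x :: "complex^2"
  have "\<alpha> \<noteq> 0"
  proof
    assume "\<alpha> = 0"
    with det_real have "(cmod (v$2$1))^2 = -1" by simp
    then show False using zero_le_power2[of "cmod (v$2$1)"] by linarith
  qed
  then have form: "bil (vconj x) (v *v x) = of_real (R x / \<alpha>)" for x
    using hermitian_2x2_quadratic_form[OF diag off refl, of x]
    by (simp add: R_def det_real field_simps)
  have R_pos: "R x > 0" if "x \<noteq> 0" for x :: "complex^2"
  proof (cases "x$2 = 0")
    case True
    with that have "x$1 \<noteq> 0" by (auto simp: vec_eq_iff forall_2)
    then show ?thesis using True \<open>\<alpha> \<noteq> 0\<close> unfolding R_def by (simp add: add_pos_nonneg)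
  next
    case False
    then show ?thesis unfolding R_def by (simp add: add_nonneg_pos)
  qed
  show ?thesis
  proof (cases "\<alpha> > 0")
    case True
    then have "pos_def v" unfolding pos_def_def using form R_pos by simp
    then show ?thesis ..
  next
    case False
    with \<open>\<alpha> \<noteq> 0\<close> have "\<alpha> < 0" by simp
    then have "neg_def v" unfolding neg_def_def using form R_pos by (simp add: divide_pos_neg)
    then show ?thesis ..
  qed
qed

section \<open>The doubled Cauchy matrix system\<close>

definition col1 :: "complex^'n \<Rightarrow> complex^2^'n" where "col1 x = (\<chi> a k. if k = 1 then x$a else 0)"
definition col2 :: "complex^'n \<Rightarrow> complex^2^'n" where "col2 x = (\<chi> a k. if k = 2 then x$a else 0)"
definition row1 :: "complex^'n \<Rightarrow> complex^'n^2" where "row1 y = (\<chi> k a. if k = 1 then y$a else 0)"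
definition row2 :: "complex^'n \<Rightarrow> complex^'n^2" where "row2 y = (\<chi> k a. if k = 2 then y$a else 0)"

lemma col_row_mult:
  "col1 x ** row1 y = outer x y" "col2 x ** row2 y = outer x y"
  "col1 x ** row2 y = 0" "col2 x ** row1 y = 0"
  by (simp_all add: col1_def col2_def row1_def row2_def outer_def matrix_matrix_mult_def
      vec_eq_iff sum_2)

lemma row_col_mult:
  "row1 y ** col1 x = (\<chi> i j. if i = 1 \<and> j = 1 then bil y x else 0)"
  "row1 y ** col2 x = (\<chi> i j. if i = 1 \<and> j = 2 then bil y x else 0)"
  "row2 y ** col1 x = (\<chi> i j. if i = 2 \<and> j = 1 then bil y x else 0)"
  "row2 y ** col2 x = (\<chi> i j. if i = 2 \<and> j = 2 then bil y x else 0)"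
  unfolding vec_eq_iff
  by (auto simp: col1_def col2_def row1_def row2_def bil_def matrix_matrix_mult_def forall_2)

lemma matrix_mul_col: "A ** col1 x = col1 (A *v x)" "A ** col2 x = col2 (A *v x)"
  unfolding vec_eq_iff
  by (auto simp: col1_def col2_def matrix_matrix_mult_def matrix_vector_mult_def forall_2)

lemma row_matrix_mul: "row1 y ** A = row1 (y v* A)" "row2 y ** A = row2 (y v* A)"
  unfolding vec_eq_iff
  by (auto simp: row1_def row2_def matrix_matrix_mult_def vector_matrix_mult_def forall_2)

lemma col_mconj: "mconj (col1 x) = col1 (vconj x)" "mconj (col2 x) = col2 (vconj x)"
  by (simp_all add: col1_def col2_def mconj_def vconj_def vec_eq_iff)

lemma row_mconj: "mconj (row1 x) = row1 (vconj x)" "mconj (row2 x) = row2 (vconj x)"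
  by (simp_all add: row1_def row2_def mconj_def vconj_def vec_eq_iff)

lemma col_row_zero [simp]: "col1 0 = 0" "col2 0 = 0" "row1 0 = 0" "row2 0 = 0"
  by (simp_all add: col1_def col2_def row1_def row2_def vec_eq_iff)

lemma col_uminus: "col1 (-x) = - col1 x" "col2 (-x) = - col2 x"
  by (simp_all add: col1_def col2_def vec_eq_iff)

lemma row_uminus: "row1 (-x) = - row1 x" "row2 (-x) = - row2 x"
  by (simp_all add: row1_def row2_def vec_eq_iff)

text \<open>With \<open>L = (K\<^sup>*)\<^sup>-\<^sup>1\<close>, the data and their conjugates are packed into
  \<open>\<K> = diag(K, -L)\<close> (\<open>K_blk\<close>), \<open>\<M> = [[0, M], [M\<^sup>*, 0]]\<close> (\<open>M_blk\<close>),
  \<open>\<R> = [[r, 0], [0, L r\<^sup>*]]\<close> (\<open>r_blk\<close>) and \<open>\<S> = [[0, -s\<^sup>\<dagger> L], [s\<^sup>T, 0]]\<close> (\<open>s_blk\<close>).\<close>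

definition conj_inv :: "complex^'n^'n \<Rightarrow> complex^'n^'n" where
  "conj_inv K = matrix_inv (mconj K)"

definition K_blk :: "complex^'n^'n \<Rightarrow> complex^('n+'n)^('n+'n)" where
  "K_blk K = block K 0 0 (- conj_inv K)"

definition K_blk_inv :: "complex^'n^'n \<Rightarrow> complex^('n+'n)^('n+'n)" where
  "K_blk_inv K = block (matrix_inv K) 0 0 (- mconj K)"

definition M_blk :: "complex^'n^'n \<Rightarrow> complex^('n+'n)^('n+'n)" where
  "M_blk M = block 0 M (mconj M) 0"

definition r_blk :: "complex^'n^'n \<Rightarrow> complex^'n \<Rightarrow> complex^2^('n+'n)" where
  "r_blk K r = col_block (col1 r) (col2 (conj_inv K *v vconj r))"

definition s_blk :: "complex^'n^'n \<Rightarrow> complex^'n \<Rightarrow> complex^('n+'n)^2" where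
  "s_blk K s = row_block (row2 s) (row1 (- (vconj s v* conj_inv K)))"

definition G_blk :: "complex^'n^'n \<Rightarrow> complex^('n+'n)^('n+'n)" where
  "G_blk M = matrix_inv (mat 1 - M_blk M)"

definition J_mat :: "complex^'n^'n \<Rightarrow> complex^'n \<Rightarrow> complex^'n \<Rightarrow> complex^'n^'n \<Rightarrow> complex^2^2" where
  "J_mat K r s M = mat 1 + s_blk K s ** G_blk M ** K_blk_inv K ** r_blk K r"

definition Y_mat :: "complex^'n^'n \<Rightarrow> complex^'n \<Rightarrow> complex^'n \<Rightarrow> complex^'n^'n \<Rightarrow> complex^2^2" where
  "Y_mat K r s M = s_blk K s ** K_blk_inv K ** G_blk M ** r_blk K r"

definition sigma3 :: "complex^2^2" where
  "sigma3 = (\<chi> i j. if i = j then (if i = 1 then 1 else -1) else 0)"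

definition E2 :: "complex^2^2" where
  "E2 = (\<chi> i j. if i = 1 \<and> j = 2 then 1 else if i = 2 \<and> j = 1 then -1 else 0)"

definition swap_blk :: "complex^('n::finite+'n)^('n+'n)" where
  "swap_blk = block 0 (mat 1) (mat 1) 0"

lemma sigma3_sigma3: "sigma3 ** sigma3 = mat 1"
  by (simp add: sigma3_def mat_def matrix_matrix_mult_def vec_eq_iff sum_2 forall_2)

lemma E2_E2: "E2 ** E2 = - mat 1"
  by (simp add: E2_def mat_def matrix_matrix_mult_def vec_eq_iff sum_2 forall_2)

lemma swap_blk_swap_blk: "swap_blk ** swap_blk = mat 1"
  by (simp add: swap_blk_def block_mult block_mat_1)

lemma swap_blk_col_block: "swap_blk ** col_block U W = col_block W U"
  by (simp add: swap_blk_def block_col_block)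

lemma row_block_swap_blk: "row_block X Y ** swap_blk = row_block Y X"
  by (simp add: swap_blk_def row_block_block)

lemma swap_blk_block: "swap_blk ** block A B C D ** swap_blk = block D C B A"
  by (simp add: swap_blk_def block_mult)

lemma col_E2: "col1 x ** E2 = col2 x" "col2 x ** E2 = - col1 x"
  by (simp_all add: col1_def col2_def E2_def matrix_matrix_mult_def vec_eq_iff sum_2)

lemma E2_row: "E2 ** row1 y = - row2 y" "E2 ** row2 y = row1 y"
  by (simp_all add: row1_def row2_def E2_def matrix_matrix_mult_def vec_eq_iff sum_2)

lemma displacement_resolvent_identities:
  fixes K Ki N G :: "complex^'m^'m" and R :: "complex^'k^'m" and S :: "complex^'m^'k"
  assumes KK: "K ** Ki = mat 1" "Ki ** K = mat 1"
    and NG: "N ** G = mat 1" "G ** N = mat 1"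
    and RS: "N ** K - K ** N = R ** S"
  shows "(mat 1 + S ** G ** Ki ** R) ** (mat 1 - S ** Ki ** G ** R) = mat 1"
    and "G ** Ki ** R ** (mat 1 - S ** Ki ** G ** R) = Ki ** G ** R"
    and "mat 1 + G ** Ki ** R ** S = G ** Ki ** N ** K"
proof -
  have "G ** Ki ** R ** S ** Ki ** G = G ** Ki ** (R ** S) ** Ki ** G"
    by (simp add: matrix_mul_assoc)
  also have "\<dots> = G ** Ki ** N ** (K ** Ki) ** G - G ** (Ki ** K) ** N ** Ki ** G"
    by (simp add: RS[symmetric] matrix_diff_ldistrib matrix_diff_rdistrib matrix_mul_assoc)
  also have "\<dots> = G ** Ki - Ki ** G"
    by (simp add: KK NG flip: matrix_mul_assoc)
  finally have commutator: "G ** Ki - Ki ** G = G ** Ki ** R ** S ** Ki ** G" by simp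
  have "S ** (G ** Ki - Ki ** G) ** R = (S ** G ** Ki ** R) ** (S ** Ki ** G ** R)"
    unfolding commutator by (simp add: matrix_mul_assoc)
  then show "(mat 1 + S ** G ** Ki ** R) ** (mat 1 - S ** Ki ** G ** R) = mat 1"
    by (simp add: matrix_ring_distribs matrix_mul_assoc algebra_simps)
  have "G ** Ki ** R ** (mat 1 - S ** Ki ** G ** R) = (G ** Ki - G ** Ki ** R ** S ** Ki ** G) ** R"
    by (simp add: matrix_diff_ldistrib matrix_diff_rdistrib matrix_mul_assoc)
  then show "G ** Ki ** R ** (mat 1 - S ** Ki ** G ** R) = Ki ** G ** R"
    by (simp flip: commutator)
  have "G ** Ki ** R ** S = G ** Ki ** (R ** S)" by (simp add: matrix_mul_assoc)
  also have "\<dots> = G ** Ki ** N ** K - G ** (Ki ** K) ** N"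
    by (simp add: RS[symmetric] matrix_diff_ldistrib matrix_mul_assoc)
  also have "\<dots> = G ** Ki ** N ** K - mat 1" by (simp add: KK NG)
  finally show "mat 1 + G ** Ki ** R ** S = G ** Ki ** N ** K" by simp
qed

context
  fixes K :: "complex^'n^'n"
  assumes K_inv: "invertible K"
begin

lemma conj_inv_mconj: "conj_inv K ** mconj K = mat 1" "mconj K ** conj_inv K = mat 1"
  using matrix_inv_left matrix_inv_right invertible_mconj(1)[OF K_inv] by (auto simp: conj_inv_def)

lemma mconj_conj_inv: "mconj (conj_inv K) = matrix_inv K"
  using invertible_mconj[OF K_inv] by (simp add: conj_inv_def)

lemma mconj_matrix_inv: "mconj (matrix_inv K) = conj_inv K"
  using invertible_mconj[OF K_inv] by (simp add: conj_inv_def)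

lemma K_blk_inverse: "K_blk K ** K_blk_inv K = mat 1" "K_blk_inv K ** K_blk K = mat 1"
  using conj_inv_mconj matrix_inv_left[OF K_inv] matrix_inv_right[OF K_inv]
  by (simp_all add: K_blk_def K_blk_inv_def block_mult block_mat_1 matrix_ring_distribs)

lemma K_blk_inv_r_blk: "K_blk_inv K ** r_blk K r = col_block (col1 (matrix_inv K *v r)) (col2 (- vconj r))"
proof -
  have "mconj K *v (conj_inv K *v vconj r) = vconj r"
    using conj_inv_mconj by (simp add: matrix_vector_mul_assoc)
  then show ?thesis
    by (simp add: K_blk_inv_def r_blk_def block_col_block matrix_mul_col matrix_ring_distribs
        col_uminus matrix_vector_mult_uminus_left)
qed

lemma s_blk_K_blk_inv: "s_blk K s ** K_blk_inv K = row_block (row2 (s v* matrix_inv K)) (row1 (vconj s))"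
proof -
  have "vconj s v* conj_inv K v* mconj K = vconj s"
    using conj_inv_mconj by (simp add: vector_matrix_mul_assoc)
  then show ?thesis
    by (simp add: K_blk_inv_def s_blk_def row_block_block row_matrix_mul matrix_ring_distribs
        row_uminus vector_matrix_mult_uminus_right)
qed

text \<open>The Sylvester equation for \<open>M\<close> together with its complex conjugate.\<close>

lemma displacement_equation:
  assumes "K ** M + M ** conj_inv K = - (outer r (vconj s) ** conj_inv K)"
  shows "(mat 1 - M_blk M) ** K_blk K - K_blk K ** (mat 1 - M_blk M) = r_blk K r ** s_blk K s"
proof -
  have "mconj K ** mconj M + mconj M ** matrix_inv K = - (outer (vconj r) s ** matrix_inv K)"
    using arg_cong[OF assms, of mconj] mconj_conj_inv
    by (simp add: mconj_add mconj_mult mconj_uminus mconj_outer)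
  then have "conj_inv K ** (mconj K ** mconj M + mconj M ** matrix_inv K) ** K
      = - (conj_inv K ** outer (vconj r) s ** matrix_inv K ** K)"
    by (simp add: matrix_ring_distribs matrix_mul_assoc)
  then have conj_eq: "mconj M ** K + conj_inv K ** mconj M = - outer (conj_inv K *v vconj r) s"
    using conj_inv_mconj matrix_inv_left[OF K_inv]
    by (simp add: matrix_add_ldistrib matrix_add_rdistrib matrix_mul_assoc matrix_mul_outer)
       (simp add: matrix_mul_assoc[symmetric] add.commute)
  have "- (conj_inv K ** mconj M) - mconj M ** K = - (mconj M ** K + conj_inv K ** mconj M)"
    by (metis add.commute minus_add_distrib diff_conv_add_uminus)
  then have lower: "- (conj_inv K ** mconj M) - mconj M ** K = outer (conj_inv K *v vconj r) s"
    using conj_eq by simp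
  have "(mat 1 - M_blk M) ** K_blk K - K_blk K ** (mat 1 - M_blk M) = K_blk K ** M_blk M - M_blk M ** K_blk K"
    by (simp add: matrix_diff_ldistrib matrix_diff_rdistrib)
  also have "\<dots> = block 0 (K ** M + M ** conj_inv K) (- (conj_inv K ** mconj M) - mconj M ** K) 0"
    by (simp add: K_blk_def M_blk_def block_mult block_diff matrix_ring_distribs)
  also have "\<dots> = r_blk K r ** s_blk K s"
    unfolding assms lower
    by (simp add: r_blk_def s_blk_def col_block_row_block col_row_mult row_uminus
        matrix_mul_uminus_right outer_vector_matrix_mult)
  finally show ?thesis .
qed

lemma mconj_K_blk_inv: "mconj (K_blk_inv K) = - (swap_blk ** K_blk K ** swap_blk)"
  by (simp add: K_blk_inv_def K_blk_def block_mconj swap_blk_block block_uminus mconj_uminus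
      mconj_matrix_inv)

lemma mconj_r_blk: "mconj (r_blk K r) = swap_blk ** K_blk_inv K ** r_blk K r ** E2"
proof -
  have "swap_blk ** K_blk_inv K ** r_blk K r ** E2 = swap_blk ** (K_blk_inv K ** r_blk K r) ** E2"
    by (simp add: matrix_mul_assoc)
  also have "\<dots> = col_block (col1 (vconj r)) (col2 (matrix_inv K *v r))"
    unfolding K_blk_inv_r_blk
    by (simp add: swap_blk_col_block col_block_mult col_E2 col_uminus matrix_mul_uminus_left)
  also have "\<dots> = mconj (r_blk K r)"
    using mconj_conj_inv by (simp add: r_blk_def col_block_mconj col_mconj vconj_matrix_vector_mult)
  finally show ?thesis by simp
qed

lemma mconj_s_blk: "mconj (s_blk K s) = - (E2 ** s_blk K s ** K_blk_inv K ** swap_blk)"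
proof -
  have "E2 ** s_blk K s ** K_blk_inv K ** swap_blk = E2 ** ((s_blk K s ** K_blk_inv K) ** swap_blk)"
    by (simp add: matrix_mul_assoc)
  also have "\<dots> = row_block (- row2 (vconj s)) (row1 (s v* matrix_inv K))"
    unfolding s_blk_K_blk_inv by (simp add: row_block_swap_blk mult_row_block E2_row)
  also have "\<dots> = - mconj (s_blk K s)"
    using mconj_conj_inv
    by (simp add: s_blk_def row_block_mconj row_mconj vconj_vector_matrix_mult row_uminus
        mconj_uminus row_block_uminus)
  finally show ?thesis by simp
qed

end

definition Q_mat :: "complex^'n^'n \<Rightarrow> complex^'n^'n" where
  "Q_mat M = matrix_inv (mat 1 - mconj M ** M)"

context
  fixes M :: "complex^'n^'n"
  assumes M_reg: "invertible (mat 1 - mconj M ** M)"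
begin

lemma Q_mat_eq: "Q_mat M - mconj M ** M ** Q_mat M = mat 1"
  using matrix_inv_right[OF M_reg] by (simp add: Q_mat_def matrix_diff_rdistrib)

lemma matrix_inv_1_minus_M_mconj: "matrix_inv (mat 1 - M ** mconj M) = mat 1 + M ** Q_mat M ** mconj M"
proof (rule matrix_inv_unique)
  have "(mat 1 - M ** mconj M) ** (mat 1 + M ** Q_mat M ** mconj M)
      = mat 1 - M ** mconj M + M ** (Q_mat M - mconj M ** M ** Q_mat M) ** mconj M"
    by (simp add: matrix_ring_distribs matrix_mul_assoc algebra_simps)
  then show "(mat 1 - M ** mconj M) ** (mat 1 + M ** Q_mat M ** mconj M) = mat 1"
    by (simp add: Q_mat_eq)
qed

lemma one_minus_M_blk_inverse:
  "(mat 1 - M_blk M)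
   ** block (mat 1 + M ** Q_mat M ** mconj M) (M ** Q_mat M) (Q_mat M ** mconj M) (Q_mat M) = mat 1"
proof -
  let ?Q = "Q_mat M"
  have "mat 1 - M_blk M = block (mat 1) (- M) (- mconj M) (mat 1)"
    by (simp add: M_blk_def block_mat_1 block_diff)
  moreover have "mat 1 ** (mat 1 + M ** ?Q ** mconj M) + - M ** (?Q ** mconj M) = mat 1"
    by (simp add: matrix_mul_uminus_left matrix_mul_assoc)
  moreover have "mat 1 ** (M ** ?Q) + - M ** ?Q = 0"
    by (simp add: matrix_mul_uminus_left)
  moreover have "- mconj M ** (mat 1 + M ** ?Q ** mconj M) + mat 1 ** (?Q ** mconj M) = 0"
  proof -
    have "- mconj M ** (mat 1 + M ** ?Q ** mconj M) + mat 1 ** (?Q ** mconj M)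
        = (?Q - mconj M ** M ** ?Q - mat 1) ** mconj M"
      by (simp add: matrix_ring_distribs matrix_mul_assoc algebra_simps)
    then show ?thesis by (simp add: Q_mat_eq)
  qed
  moreover have "- mconj M ** (M ** ?Q) + mat 1 ** ?Q = mat 1"
    using Q_mat_eq by (simp add: matrix_mul_uminus_left matrix_mul_assoc algebra_simps)
  ultimately show ?thesis by (simp only: block_mult block_mat_1)
qed

lemma G_blk_eq:
  "G_blk M = block (matrix_inv (mat 1 - M ** mconj M)) (M ** Q_mat M) (Q_mat M ** mconj M) (Q_mat M)"
  unfolding G_blk_def matrix_inv_1_minus_M_mconj by (rule matrix_inv_unique[OF one_minus_M_blk_inverse])

lemma G_blk_inverse: "(mat 1 - M_blk M) ** G_blk M = mat 1" "G_blk M ** (mat 1 - M_blk M) = mat 1"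
proof -
  have "invertible (mat 1 - M_blk M)"
    using one_minus_M_blk_inverse invertible_right_inverse by blast
  then show "(mat 1 - M_blk M) ** G_blk M = mat 1" "G_blk M ** (mat 1 - M_blk M) = mat 1"
    by (simp_all add: G_blk_def matrix_inv_right matrix_inv_left)
qed

lemma mconj_G_blk: "mconj (G_blk M) = swap_blk ** G_blk M ** swap_blk"
proof -
  let ?N = "mat 1 - M_blk M"
  have "(swap_blk ** ?N ** swap_blk) ** (swap_blk ** G_blk M ** swap_blk)
      = swap_blk ** ?N ** (swap_blk ** swap_blk) ** G_blk M ** swap_blk"
    by (simp add: matrix_mul_assoc)
  also have "\<dots> = swap_blk ** (?N ** G_blk M) ** swap_blk"
    by (simp add: swap_blk_swap_blk matrix_mul_assoc)
  also have "\<dots> = mat 1"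
    by (simp add: G_blk_inverse swap_blk_swap_blk)
  finally have "matrix_inv (swap_blk ** ?N ** swap_blk) = swap_blk ** G_blk M ** swap_blk"
    by (rule matrix_inv_unique)
  moreover have "mconj ?N = swap_blk ** ?N ** swap_blk"
    by (simp add: M_blk_def block_mat_1 block_diff block_mconj swap_blk_block mconj_uminus)
  moreover have "mconj (G_blk M) ** mconj ?N = mat 1"
    using G_blk_inverse(2) by (simp flip: mconj_mult)
  then have "matrix_inv (mconj ?N) = mconj (G_blk M)"
    by (rule matrix_inv_unique_left)
  ultimately show ?thesis by simp
qed

end

locale cauchy_point =
  fixes K M :: "complex^'n^'n" and r s :: "complex^'n"
  assumes K_inv: "invertible K"
    and sylvester: "K ** M + M ** conj_inv K = - (outer r (vconj s) ** conj_inv K)"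
    and M_reg: "invertible (mat 1 - mconj M ** M)"
begin

abbreviation J :: "complex^2^2" where "J \<equiv> J_mat K r s M"
abbreviation Y :: "complex^2^2" where "Y \<equiv> Y_mat K r s M"

lemmas resolvent_identities =
  displacement_resolvent_identities[OF K_blk_inverse[OF K_inv] G_blk_inverse[OF M_reg]
      displacement_equation[OF K_inv sylvester]]

lemma J_mat_inverse: "J ** (mat 1 - Y) = mat 1"
  using resolvent_identities(1) by (simp add: J_mat_def Y_mat_def)

lemma matrix_inv_J_mat: "matrix_inv J = mat 1 - Y"
  using J_mat_inverse by (rule matrix_inv_unique)

lemma resolvent_mult_inverse_J_mat:
  "G_blk M ** K_blk_inv K ** r_blk K r ** (mat 1 - Y) = K_blk_inv K ** G_blk M ** r_blk K r"
  using resolvent_identities(2) by (simp add: Y_mat_def)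

lemma det_J_mat: "det J = 1"
proof -
  let ?d = "\<lambda>X. det (block (mat 1 :: complex^2^2) 0 0 X)"
  have d_mult: "?d (X ** Z) = ?d X * ?d Z" for X Z :: "complex^('n+'n)^('n+'n)"
    by (simp add: det_mul[symmetric] block_mult)
  have "J = mat 1 + s_blk K s ** (G_blk M ** K_blk_inv K ** r_blk K r)"
    by (simp add: J_mat_def matrix_mul_assoc)
  then have "det J = ?d (mat 1 + G_blk M ** K_blk_inv K ** r_blk K r ** s_blk K s)"
    using det_mat_1_add_mult by simp
  also have "\<dots> = ?d (G_blk M ** K_blk_inv K ** (mat 1 - M_blk M) ** K_blk K)"
    using resolvent_identities(3) by simp
  also have "\<dots> = ?d (G_blk M ** (mat 1 - M_blk M)) * ?d (K_blk_inv K ** K_blk K)"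
    by (simp add: d_mult)
  also have "\<dots> = 1"
    using G_blk_inverse(2)[OF M_reg] K_blk_inverse(2)[OF K_inv] by (simp flip: block_mat_1)
  finally show ?thesis .
qed

text \<open>Conjugation swaps the two halves of the doubled system.\<close>

lemma mconj_J_mat: "mconj J = E2 ** (mat 1 - Y) ** (- E2)"
proof -
  let ?S = "s_blk K s" and ?G = "G_blk M" and ?Ki = "K_blk_inv K" and ?R = "r_blk K r"
  let ?P = "swap_blk :: complex^('n+'n)^('n+'n)"
  have "mconj J = mat 1 + mconj ?S ** mconj ?G ** mconj ?Ki ** mconj ?R"
    by (simp add: J_mat_def mconj_add mconj_mult)
  also have "\<dots> = mat 1 + (- (E2 ** ?S ** ?Ki ** ?P)) ** (?P ** ?G ** ?P)
      ** (- (?P ** K_blk K ** ?P)) ** (?P ** ?Ki ** ?R ** E2)"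
    by (simp add: mconj_s_blk[OF K_inv] mconj_G_blk[OF M_reg] mconj_K_blk_inv[OF K_inv]
        mconj_r_blk[OF K_inv])
  also have "\<dots> = mat 1 + E2 ** ?S ** ?Ki ** (?P ** ?P) ** ?G ** (?P ** ?P) ** K_blk K
      ** (?P ** ?P) ** ?Ki ** ?R ** E2"
    by (simp add: matrix_ring_distribs matrix_mul_assoc)
  also have "\<dots> = mat 1 + E2 ** (?S ** ?Ki ** ?G ** (K_blk K ** ?Ki) ** ?R) ** E2"
    by (simp add: swap_blk_swap_blk matrix_mul_assoc)
  also have "\<dots> = mat 1 + E2 ** (?S ** ?Ki ** ?G ** ?R) ** E2"
    by (simp add: K_blk_inverse(1)[OF K_inv])
  also have "\<dots> = E2 ** (mat 1 - Y) ** (- E2)"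
    by (simp add: Y_mat_def matrix_ring_distribs E2_E2)
  finally show ?thesis .
qed

text \<open>For a \<open>2 \<times> 2\<close> matrix of determinant one, \<open>E\<^sub>2 J\<^sup>-\<^sup>1 E\<^sub>2\<^sup>-\<^sup>1\<close> is the transpose of \<open>J\<close>.\<close>

lemma J_mat_hermitian: "cnj (J $ i $ j) = J $ j $ i"
proof -
  let ?A = "(\<chi> i j. if i = 1 \<and> j = 1 then J$2$2 else if i = 1 \<and> j = 2 then - J$1$2
                 else if i = 2 \<and> j = 1 then - J$2$1 else J$1$1) :: complex^2^2"
  have "J ** ?A = mat (det J)"
    by (simp add: det_2 mat_def matrix_matrix_mult_def vec_eq_iff sum_2 forall_2 algebra_simps)
  then have "matrix_inv J = ?A" using det_J_mat by (simp add: matrix_inv_unique)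
  then have "mconj J = E2 ** ?A ** (- E2)" using mconj_J_mat matrix_inv_J_mat by simp
  then have "mconj J $ i $ j = (E2 ** ?A ** (- E2)) $ i $ j" by simp
  then show ?thesis
    using exhaust_2[of i] exhaust_2[of j]
    by (auto simp: mconj_def E2_def matrix_matrix_mult_def sum_2)
qed

lemma J_mat_entries:
  "J $ 1 $ 1 = 1 - s1_val K r s M" "J $ 2 $ 1 = s3_val K r s M" "J $ 2 $ 2 = 1 - s4_val K r s M"
proof -
  let ?Q = "Q_mat M" and ?a = "matrix_inv K *v r" and ?b = "vconj r"
    and ?t = "vconj s v* conj_inv K"
  have "J = mat 1 + s_blk K s ** G_blk M ** (K_blk_inv K ** r_blk K r)"
    by (simp add: J_mat_def matrix_mul_assoc)
  also have "\<dots> = mat 1 + (row2 (s v* matrix_inv (mat 1 - M ** mconj M)) ** col1 ?a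
      - row1 (?t v* (?Q ** mconj M)) ** col1 ?a
      - (row2 (s v* (M ** ?Q)) ** col2 ?b - row1 (?t v* ?Q) ** col2 ?b))"
    unfolding K_blk_inv_r_blk[OF K_inv] G_blk_eq[OF M_reg] s_blk_def
    by (simp add: row_block_block row_block_col_block row_matrix_mul matrix_ring_distribs
        row_uminus col_uminus vector_matrix_mult_uminus_left algebra_simps)
  finally have J_eq: "J = \<dots>" .
  show "J $ 1 $ 1 = 1 - s1_val K r s M"
    unfolding J_eq s1_val_def conj_inv_def Q_mat_def
    by (simp add: row_col_mult mat_def bil_vector_matrix_mult vector_matrix_mul_assoc
        matrix_vector_mul_assoc matrix_mul_assoc)
  show "J $ 2 $ 1 = s3_val K r s M"
    unfolding J_eq s3_val_def
    by (simp add: row_col_mult mat_def bil_vector_matrix_mult matrix_vector_mul_assoc)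
  show "J $ 2 $ 2 = 1 - s4_val K r s M"
    unfolding J_eq s4_val_def Q_mat_def
    by (simp add: row_col_mult mat_def bil_vector_matrix_mult)
qed

lemma vmat_eq: "vmat K r s M = sigma3 ** J ** sigma3"
proof -
  have "J $ 1 $ 2 = cnj (s3_val K r s M)"
    using J_mat_hermitian[of 2 1] J_mat_entries(2) by simp
  then show ?thesis
    using J_mat_entries by (simp add: vmat_def sigma3_def matrix_matrix_mult_def vec_eq_iff forall_2 sum_2)
qed

lemma adj_vmat: "adj (vmat K r s M) = vmat K r s M"
proof -
  have "cnj (s1_val K r s M) = s1_val K r s M" "cnj (s4_val K r s M) = s4_val K r s M"
    using J_mat_hermitian[of 1 1] J_mat_hermitian[of 2 2] J_mat_entries
    by (simp_all add: complex_eq_iff)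
  then show ?thesis by (simp add: adj_def mconj_def transpose_def vmat_def vec_eq_iff forall_2)
qed

lemma det_vmat: "det (vmat K r s M) = 1"
proof -
  have "det (vmat K r s M) = det sigma3 * det J * det sigma3"
    by (simp add: vmat_eq det_mul)
  then show ?thesis using det_J_mat by (simp add: det_2 sigma3_def)
qed

lemma vmat_definite: "pos_def (vmat K r s M) \<or> neg_def (vmat K r s M)"
  by (rule hermitian_det_1_definite[OF adj_vmat det_vmat])

end

section \<open>The flows\<close>

definition A_xi :: "complex^'n^'n \<Rightarrow> nat \<Rightarrow> complex^'n^'n" where
  "A_xi K m = mpow K m + msmult ((-1)^(m+1)) (mpow (matrix_inv K) m)"

definition A_eta :: "complex^'n^'n \<Rightarrow> nat \<Rightarrow> complex^'n^'n" where
  "A_eta K m = msmult \<i> (mpow K m - msmult ((-1)^(m+1)) (mpow (matrix_inv K) m))"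

definition A_dir :: "complex^'n^'n \<Rightarrow> bool \<Rightarrow> nat \<Rightarrow> complex^'n^'n" where
  "A_dir K d m = (if d then A_xi K m else A_eta K m)"

definition line_pt :: "bool \<Rightarrow> nat \<Rightarrow> (nat \<Rightarrow> real) \<Rightarrow> (nat \<Rightarrow> real) \<Rightarrow> real
    \<Rightarrow> (nat \<Rightarrow> real) \<times> (nat \<Rightarrow> real)" where
  "line_pt d m x y t = (if d then (x(m := t), y) else (x, y(m := t)))"

definition D_blk :: "complex^'n^'n \<Rightarrow> complex^('n+'n)^('n+'n)" where
  "D_blk A = block A 0 0 (mconj A)"

definition Kz_blk :: "complex^'n^'n \<Rightarrow> nat \<Rightarrow> complex^('n+'n)^('n+'n)" where
  "Kz_blk K m = msmult (1/2) (D_blk (A_xi K m) - msmult \<i> (D_blk (A_eta K m)))"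

definition Kzb_blk :: "complex^'n^'n \<Rightarrow> nat \<Rightarrow> complex^('n+'n)^('n+'n)" where
  "Kzb_blk K m = msmult (1/2) (D_blk (A_xi K m) + msmult \<i> (D_blk (A_eta K m)))"

lemma M_blk_D_blk: "M_blk (A ** X + X ** mconj A) = D_blk A ** M_blk X + M_blk X ** D_blk A"
  by (simp add: M_blk_def D_blk_def block_mult block_add mconj_add mconj_mult)

lemma r_blk_D_blk:
  assumes "mconj A ** conj_inv K = conj_inv K ** mconj A"
  shows "r_blk K (A *v x) = D_blk A ** r_blk K x"
proof -
  have "conj_inv K *v (mconj A *v vconj x) = mconj A *v (conj_inv K *v vconj x)"
    using assms by (simp add: matrix_vector_mul_assoc)
  then show ?thesis
    by (simp add: r_blk_def D_blk_def block_col_block matrix_mul_col vconj_matrix_vector_mult)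
qed

lemma s_blk_D_blk:
  assumes "mconj A ** conj_inv K = conj_inv K ** mconj A"
  shows "s_blk K (transpose A *v y) = s_blk K y ** D_blk A"
proof -
  have "vconj y v* mconj A v* conj_inv K = vconj y v* conj_inv K v* mconj A"
    using assms by (simp add: vector_matrix_mul_assoc)
  then show ?thesis
    by (simp add: s_blk_def D_blk_def row_block_block row_matrix_mul vconj_vector_matrix_mult
        vector_matrix_mult_uminus_left row_uminus matrix_mul_uminus_left)
qed

lemma bounded_linear_r_blk: "bounded_linear (r_blk K)"
  unfolding linear_conv_bounded_linear[symmetric]
  by (auto intro!: linearI simp: r_blk_def vec_eq_iff col_block_def col1_def col2_def vconj_def
      matrix_vector_mult_def sum.distrib scaleR_sum_right algebra_simps split: sum.split)

lemma bounded_linear_s_blk: "bounded_linear (s_blk K)"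
  unfolding linear_conv_bounded_linear[symmetric]
  by (auto intro!: linearI simp: s_blk_def vec_eq_iff row_block_def row1_def row2_def vconj_def
      vector_matrix_mult_def sum.distrib scaleR_sum_right algebra_simps split: sum.split)

lemma bounded_linear_M_blk: "bounded_linear M_blk"
  unfolding linear_conv_bounded_linear[symmetric]
  by (auto intro!: linearI simp: M_blk_def vec_eq_iff block_def mconj_def algebra_simps
      split: sum.split)

lemma mconj_A_xi_A_eta:
  "mconj (A_xi K m) = mpow (mconj K) m + msmult ((-1)^(m+1)) (mpow (mconj (matrix_inv K)) m)"
  "mconj (A_eta K m) = msmult (- \<i>) (mpow (mconj K) m - msmult ((-1)^(m+1)) (mpow (mconj (matrix_inv K)) m))"
  by (simp_all add: A_xi_def A_eta_def mconj_add mconj_diff mconj_msmult mconj_mpow)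

lemma Kz_blk_eq: "Kz_blk K m = block (mpow K m) 0 0 (msmult ((-1)^(m+1)) (mpow (mconj (matrix_inv K)) m))"
  unfolding Kz_blk_def D_blk_def mconj_A_xi_A_eta
  by (rule block_eqI) (simp_all add: A_xi_def A_eta_def msmult_def field_simps)

lemma Kzb_blk_eq: "Kzb_blk K m = block (msmult ((-1)^(m+1)) (mpow (matrix_inv K) m)) 0 0 (mpow (mconj K) m)"
  unfolding Kzb_blk_def D_blk_def mconj_A_xi_A_eta
  by (rule block_eqI) (simp_all add: A_xi_def A_eta_def msmult_def field_simps)

lemma sylvester_flow:
  assumes "K ** X + X ** L = - (P ** L)"
    and cK: "A ** K = K ** A" and cL: "mconj A ** L = L ** mconj A"
  shows "K ** (A ** X + X ** mconj A) + (A ** X + X ** mconj A) ** L = - ((P ** mconj A + A ** P) ** L)"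
proof -
  have "K ** (A ** X + X ** mconj A) + (A ** X + X ** mconj A) ** L
      = A ** (K ** X + X ** L) + (K ** X + X ** L) ** mconj A"
    by (simp add: matrix_ring_distribs matrix_mul_assoc cK algebra_simps)
      (simp flip: matrix_mul_assoc add: cL)
  also have "\<dots> = - ((P ** mconj A + A ** P) ** L)"
    unfolding assms(1)
    by (simp add: matrix_ring_distribs matrix_mul_assoc algebra_simps)
      (simp flip: matrix_mul_assoc add: cL)
  finally show ?thesis .
qed

context
  fixes K :: "complex^'n^'n"
  assumes K_inv: "invertible K"
begin

lemma A_dir_commute: "A_dir K d m ** K = K ** A_dir K d m"
proof -
  have commute: "A ** K = K ** A \<Longrightarrow> msmult c A ** K = K ** msmult c A"
    "A ** K = K ** A \<Longrightarrow> B ** K = K ** B \<Longrightarrow> (A + B) ** K = K ** (A + B)"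
    "A ** K = K ** A \<Longrightarrow> B ** K = K ** B \<Longrightarrow> (A - B) ** K = K ** (A - B)" for A B c
    by (simp_all add: matrix_ring_distribs flip: msmult_matrix_mul_left msmult_matrix_mul_right)
  have "mpow K m ** K = K ** mpow K m" by (rule mpow_commute) simp
  moreover have "mpow (matrix_inv K) m ** K = K ** mpow (matrix_inv K) m"
    using matrix_inv_left[OF K_inv] matrix_inv_right[OF K_inv] by (intro mpow_commute) simp
  ultimately show ?thesis
    by (simp add: A_dir_def A_xi_def A_eta_def commute)
qed

lemma A_dir_commute_inv: "A_dir K d m ** matrix_inv K = matrix_inv K ** A_dir K d m"
  by (rule matrix_inv_commute[OF A_dir_commute K_inv])

lemma A_dir_commute_conj_inv: "mconj (A_dir K d m) ** conj_inv K = conj_inv K ** mconj (A_dir K d m)"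
  unfolding conj_inv_def
  using A_dir_commute invertible_mconj(1)[OF K_inv]
  by (intro matrix_inv_commute) (simp_all flip: mconj_mult)

lemma D_blk_K_blk_inv_commute: "D_blk (A_dir K d m) ** K_blk_inv K = K_blk_inv K ** D_blk (A_dir K d m)"
proof -
  have "mconj (A_dir K d m) ** mconj K = mconj K ** mconj (A_dir K d m)"
    using A_dir_commute by (simp flip: mconj_mult)
  then show ?thesis
    using A_dir_commute_inv
    by (simp add: D_blk_def K_blk_inv_def block_mult matrix_ring_distribs)
qed

lemma transpose_A_dir:
  "transpose (A_dir K True m) =
     mpow (transpose K) m + msmult ((-1)^(m+1)) (mpow (matrix_inv (transpose K)) m)"
  "transpose (A_dir K False m) =
     msmult \<i> (mpow (transpose K) m - msmult ((-1)^(m+1)) (mpow (matrix_inv (transpose K)) m))"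
  by (simp_all add: A_dir_def A_xi_def A_eta_def transpose_add transpose_diff transpose_msmult
      transpose_mpow matrix_inv_transpose[OF K_inv])

text \<open>The index shifts that couple the \<open>n\<close>-th and \<open>(n+1)\<close>-th flows.\<close>

lemma Kz_blk_Suc: "Kz_blk K (Suc n) ** K_blk_inv K = Kz_blk K n"
proof -
  have "mpow K (Suc n) ** matrix_inv K = mpow K n"
    using matrix_inv_right[OF K_inv] by (simp add: mpow_Suc_right flip: matrix_mul_assoc)
  moreover have "mpow (mconj (matrix_inv K)) (Suc n) ** mconj K = mpow (mconj (matrix_inv K)) n"
    using matrix_inv_left[OF K_inv]
    by (simp add: mpow_Suc_right flip: matrix_mul_assoc mconj_mult)
  ultimately show ?thesis
    by (simp add: Kz_blk_eq K_blk_inv_def block_mult matrix_mul_uminus_right msmult_uminus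
        flip: msmult_matrix_mul_left)
qed

lemma Kzb_blk_Suc: "Kzb_blk K n ** K_blk_inv K = - Kzb_blk K (Suc n)"
  by (simp add: Kzb_blk_eq K_blk_inv_def block_mult block_uminus matrix_ring_distribs
      mpow_Suc_right msmult_uminus flip: msmult_matrix_mul_left)

text \<open>No common eigenvalue of \<open>K\<close> and \<open>-(K\<^sup>*)\<^sup>-\<^sup>1\<close> makes \<open>X \<mapsto> K X + X (K\<^sup>*)\<^sup>-\<^sup>1\<close> injective, so
  \<open>M\<close> is a bounded linear image of \<open>r s\<^sup>\<dagger>\<close>.\<close>

lemma sylvester_left_inverse:
  assumes "\<not> (\<exists>\<mu>. is_eigenvalue K \<mu> \<and> is_eigenvalue (- conj_inv K) \<mu>)"
  obtains g where "bounded_linear g" "\<And>X. g (K ** X + X ** conj_inv K) = X"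
proof -
  let ?T = "\<lambda>X. K ** X + X ** conj_inv K"
  have "linear ?T"
    by (auto intro!: linearI simp: matrix_ring_distribs matrix_scalar_ac
        scalar_matrix_assoc[symmetric] scaleR_add_right)
  moreover have "inj ?T"
  proof (rule injI)
    fix X Y
    assume "?T X = ?T Y"
    then have "K ** (X - Y) = (X - Y) ** (- conj_inv K)"
      by (simp add: matrix_ring_distribs algebra_simps)
    then show "X = Y" using intertwiner_eq_0 assms by fastforce
  qed
  ultimately obtain h where "linear h" "h \<circ> ?T = id"
    using linear_injective_left_inverse by blast
  then show ?thesis
    using that by (auto simp: linear_conv_bounded_linear fun_eq_iff)
qed

end

locale cauchy_flow =
  fixes K :: "complex^'n^'n"
    and r s :: "(nat \<Rightarrow> real) \<Rightarrow> (nat \<Rightarrow> real) \<Rightarrow> complex^'n"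
    and M :: "(nat \<Rightarrow> real) \<Rightarrow> (nat \<Rightarrow> real) \<Rightarrow> complex^'n^'n"
  assumes K_inv: "invertible K"
    and K_spec: "\<not> (\<exists>\<mu>. is_eigenvalue K \<mu> \<and> is_eigenvalue (- matrix_inv (mconj K)) \<mu>)"
    and M_eq: "\<And>xi eta. K ** M xi eta + M xi eta ** matrix_inv (mconj K)
                 = - (outer (r xi eta) (vconj (s xi eta)) ** matrix_inv (mconj K))"
    and r_xi: "\<And>n xi eta. n \<ge> 1 \<Longrightarrow>
       ((\<lambda>t. r (xi(n := t)) eta) has_vector_derivative
          ((mpow K n + msmult ((-1)^(n+1)) (mpow (matrix_inv K) n)) *v r xi eta)) (at (xi n))"
    and r_eta: "\<And>n xi eta. n \<ge> 1 \<Longrightarrow>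
       ((\<lambda>t. r xi (eta(n := t))) has_vector_derivative
          (msmult \<i> (mpow K n - msmult ((-1)^(n+1)) (mpow (matrix_inv K) n)) *v r xi eta)) (at (eta n))"
    and s_xi: "\<And>n xi eta. n \<ge> 1 \<Longrightarrow>
       ((\<lambda>t. s (xi(n := t)) eta) has_vector_derivative
          ((mpow (transpose K) n + msmult ((-1)^(n+1)) (mpow (matrix_inv (transpose K)) n))
             *v s xi eta)) (at (xi n))"
    and s_eta: "\<And>n xi eta. n \<ge> 1 \<Longrightarrow>
       ((\<lambda>t. s xi (eta(n := t))) has_vector_derivative
          (msmult \<i> (mpow (transpose K) n - msmult ((-1)^(n+1)) (mpow (matrix_inv (transpose K)) n))
             *v s xi eta)) (at (eta n))"
begin

lemma r_line:
  assumes "1 \<le> m"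
  shows "((\<lambda>\<tau>. case_prod r (line_pt d m x y \<tau>)) has_vector_derivative
           (A_dir K d m *v case_prod r (line_pt d m x y t))) (at t)"
  using r_xi[OF assms, of "x(m := t)" y] r_eta[OF assms, of x "y(m := t)"]
  by (cases d) (simp_all add: line_pt_def A_dir_def A_xi_def A_eta_def)

lemma s_line:
  assumes "1 \<le> m"
  shows "((\<lambda>\<tau>. case_prod s (line_pt d m x y \<tau>)) has_vector_derivative
           (transpose (A_dir K d m) *v case_prod s (line_pt d m x y t))) (at t)"
  using s_xi[OF assms, of "x(m := t)" y] s_eta[OF assms, of x "y(m := t)"]
  by (cases d) (simp_all add: line_pt_def transpose_A_dir[OF K_inv])

lemma M_line:
  assumes "1 \<le> m"
  shows "((\<lambda>\<tau>. case_prod M (line_pt d m x y \<tau>)) has_vector_derivative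
     (A_dir K d m ** case_prod M (line_pt d m x y t)
      + case_prod M (line_pt d m x y t) ** mconj (A_dir K d m))) (at t)"
proof -
  let ?A = "A_dir K d m"
  let ?R = "\<lambda>\<tau>. case_prod r (line_pt d m x y \<tau>)" and ?S = "\<lambda>\<tau>. case_prod s (line_pt d m x y \<tau>)"
    and ?M = "\<lambda>\<tau>. case_prod M (line_pt d m x y \<tau>)"
  let ?O = "outer (?R t) (vconj (?S t))"
  have sylv: "K ** ?M \<tau> + ?M \<tau> ** conj_inv K = - (outer (?R \<tau>) (vconj (?S \<tau>)) ** conj_inv K)" for \<tau>
    using M_eq by (simp add: conj_inv_def split: prod.split)
  obtain g where g: "bounded_linear g" "\<And>X. g (K ** X + X ** conj_inv K) = X"
    using sylvester_left_inverse[OF K_inv] K_spec unfolding conj_inv_def by blast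
  have "((\<lambda>\<tau>. outer (?R \<tau>) (vconj (?S \<tau>))) has_vector_derivative
      (outer (?R t) (vconj (transpose ?A *v ?S t)) + outer (?A *v ?R t) (vconj (?S t)))) (at t)"
    by (rule bounded_bilinear.has_vector_derivative[OF bounded_bilinear_outer r_line[OF assms]
          has_vector_derivative_vconj[OF s_line[OF assms]]])
  then have "((\<lambda>\<tau>. - (outer (?R \<tau>) (vconj (?S \<tau>)) ** conj_inv K)) has_vector_derivative
      - ((?O ** mconj ?A + ?A ** ?O) ** conj_inv K)) (at t)"
    using has_vector_derivative_minus[OF bounded_linear.has_vector_derivative
        [OF bounded_linear_matrix_mul_right]]
    by (simp add: vconj_vector_matrix_mult outer_vector_matrix_mult matrix_mul_outer add.commute)
  then have "((\<lambda>\<tau>. g (K ** ?M \<tau> + ?M \<tau> ** conj_inv K)) has_vector_derivative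
      g (- ((?O ** mconj ?A + ?A ** ?O) ** conj_inv K))) (at t)"
    unfolding sylv by (rule bounded_linear.has_vector_derivative[OF g(1)])
  then have M_deriv: "(?M has_vector_derivative g (- ((?O ** mconj ?A + ?A ** ?O) ** conj_inv K))) (at t)"
    by (simp add: g(2))
  have "K ** (?A ** ?M t + ?M t ** mconj ?A) + (?A ** ?M t + ?M t ** mconj ?A) ** conj_inv K
      = - ((?O ** mconj ?A + ?A ** ?O) ** conj_inv K)"
    by (rule sylvester_flow[OF sylv A_dir_commute[OF K_inv] A_dir_commute_conj_inv[OF K_inv]])
  then have "g (- ((?O ** mconj ?A + ?A ** ?O) ** conj_inv K)) = ?A ** ?M t + ?M t ** mconj ?A"
    using g(2)[of "?A ** ?M t + ?M t ** mconj ?A"] by simp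
  then show ?thesis using M_deriv by simp
qed

definition R_at :: "(nat \<Rightarrow> real) \<times> (nat \<Rightarrow> real) \<Rightarrow> complex^2^('n+'n)" where
  "R_at p = r_blk K (case_prod r p)"
definition S_at :: "(nat \<Rightarrow> real) \<times> (nat \<Rightarrow> real) \<Rightarrow> complex^('n+'n)^2" where
  "S_at p = s_blk K (case_prod s p)"
definition Mb_at :: "(nat \<Rightarrow> real) \<times> (nat \<Rightarrow> real) \<Rightarrow> complex^('n+'n)^('n+'n)" where
  "Mb_at p = M_blk (case_prod M p)"
definition G_at :: "(nat \<Rightarrow> real) \<times> (nat \<Rightarrow> real) \<Rightarrow> complex^('n+'n)^('n+'n)" where
  "G_at p = G_blk (case_prod M p)"
definition J_at :: "(nat \<Rightarrow> real) \<times> (nat \<Rightarrow> real) \<Rightarrow> complex^2^2" where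
  "J_at p = J_mat K (case_prod r p) (case_prod s p) (case_prod M p)"
definition regular :: "(nat \<Rightarrow> real) \<times> (nat \<Rightarrow> real) \<Rightarrow> bool" where
  "regular p \<longleftrightarrow> invertible (mat 1 - mconj (case_prod M p) ** case_prod M p)"

lemma cauchy_point_at: "regular p \<Longrightarrow> cauchy_point K (case_prod M p) (case_prod r p) (case_prod s p)"
  unfolding cauchy_point_def regular_def conj_inv_def using K_inv M_eq by (auto split: prod.split)

lemma R_line:
  assumes "1 \<le> m"
  shows "((\<lambda>\<tau>. R_at (line_pt d m x y \<tau>)) has_vector_derivative
           D_blk (A_dir K d m) ** R_at (line_pt d m x y t)) (at t)"
  using bounded_linear.has_vector_derivative[OF bounded_linear_r_blk[of K] r_line[OF assms, of d x y t]]
  unfolding R_at_def r_blk_D_blk[OF A_dir_commute_conj_inv[OF K_inv]] .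

lemma S_line:
  assumes "1 \<le> m"
  shows "((\<lambda>\<tau>. S_at (line_pt d m x y \<tau>)) has_vector_derivative
           S_at (line_pt d m x y t) ** D_blk (A_dir K d m)) (at t)"
  using bounded_linear.has_vector_derivative[OF bounded_linear_s_blk[of K] s_line[OF assms, of d x y t]]
  unfolding S_at_def s_blk_D_blk[OF A_dir_commute_conj_inv[OF K_inv]] .

lemma Mb_line:
  assumes "1 \<le> m"
  shows "((\<lambda>\<tau>. Mb_at (line_pt d m x y \<tau>)) has_vector_derivative
     D_blk (A_dir K d m) ** Mb_at (line_pt d m x y t) + Mb_at (line_pt d m x y t) ** D_blk (A_dir K d m))
     (at t)"
  using bounded_linear.has_vector_derivative[OF bounded_linear_M_blk M_line[OF assms, of d x y t]]
  unfolding Mb_at_def M_blk_D_blk .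

lemma regular_near:
  assumes "1 \<le> m" and "regular (line_pt d m x y t)"
  shows "\<forall>\<^sub>F \<tau> in nhds t. regular (line_pt d m x y \<tau>)"
proof -
  let ?M = "\<lambda>\<tau>. case_prod M (line_pt d m x y \<tau>)"
  let ?M' = "A_dir K d m ** ?M t + ?M t ** mconj (A_dir K d m)"
  have "((\<lambda>\<tau>. mat 1 - mconj (?M \<tau>) ** ?M \<tau>) has_vector_derivative
      0 - (mconj (?M t) ** ?M' + mconj ?M' ** ?M t)) (at t)"
    by (intro has_vector_derivative_diff has_vector_derivative_const has_vector_derivative_matrix_mul
        has_vector_derivative_mconj M_line[OF assms(1)])
  then have "continuous (at t) (\<lambda>\<tau>. mat 1 - mconj (?M \<tau>) ** ?M \<tau>)"
    using differentiableI_vector differentiable_imp_continuous_within by blast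
  then show ?thesis
    using eventually_invertible_nhds assms(2) by (simp add: regular_def)
qed

text \<open>\<open>G' = G (D \<M> + \<M> D) G\<close>, and \<open>\<M> G = G \<M> = G - 1\<close>.\<close>

lemma G_line:
  assumes "1 \<le> m" and "regular (line_pt d m x y t)"
  defines "G \<equiv> G_at (line_pt d m x y t)" and "D \<equiv> D_blk (A_dir K d m)"
  shows "((\<lambda>\<tau>. G_at (line_pt d m x y \<tau>)) has_vector_derivative
     G ** D ** G + G ** D ** G - G ** D - D ** G) (at t)"
proof -
  let ?Mb = "Mb_at (line_pt d m x y t)"
  have G_at_eq: "G_at p = matrix_inv (mat 1 - Mb_at p)" for p
    by (simp add: G_at_def G_blk_def Mb_at_def)
  have inv: "(mat 1 - ?Mb) ** G = mat 1" "G ** (mat 1 - ?Mb) = mat 1"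
    using G_blk_inverse[of "case_prod M (line_pt d m x y t)"] assms(2)
    by (simp_all add: regular_def Mb_at_def G_at_def G_def)
  then have "invertible (mat 1 - ?Mb)"
    using invertible_right_inverse by blast
  then have deriv: "((\<lambda>\<tau>. G_at (line_pt d m x y \<tau>)) has_vector_derivative
      - (G ** (0 - (D ** ?Mb + ?Mb ** D)) ** G)) (at t)"
    unfolding G_at_eq G_def D_def
    by (rule has_vector_derivative_matrix_inv[OF has_vector_derivative_diff
          [OF has_vector_derivative_const Mb_line[OF assms(1)]]])
  have MbG: "?Mb ** G = G - mat 1" "G ** ?Mb = G - mat 1"
    using inv by (simp_all add: matrix_ring_distribs algebra_simps)
  have "- (G ** (0 - (D ** ?Mb + ?Mb ** D)) ** G) = G ** D ** (?Mb ** G) + (G ** ?Mb) ** D ** G"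
    by (simp add: matrix_ring_distribs matrix_mul_assoc)
  also have "\<dots> = (G ** D ** G - G ** D) + (G ** D ** G - D ** G)"
    unfolding MbG by (simp add: matrix_ring_distribs)
  also have "\<dots> = G ** D ** G + G ** D ** G - G ** D - D ** G"
    by (simp add: algebra_simps)
  finally show ?thesis using deriv by simp
qed

end

lemma has_vector_derivative_S_G_C_R:
  fixes S :: "real \<Rightarrow> complex^'m^'k" and G :: "real \<Rightarrow> complex^'m^'m" and R :: "real \<Rightarrow> complex^'k^'m"
  assumes "(S has_vector_derivative S') (at t)" "(G has_vector_derivative G') (at t)"
    "(R has_vector_derivative R') (at t)"
  shows "((\<lambda>\<tau>. S \<tau> ** G \<tau> ** C ** R \<tau>) has_vector_derivative
      S' ** G t ** C ** R t + S t ** G' ** C ** R t + S t ** G t ** C ** R') (at t)"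
  using has_vector_derivative_matrix_mul[OF has_vector_derivative_matrix_mul
      [OF has_vector_derivative_matrix_mul[OF assms(1,2)] has_vector_derivative_const] assms(3)]
  by (simp add: matrix_ring_distribs algebra_simps)

lemma has_vector_derivative_S_G_C_G_R:
  fixes S :: "real \<Rightarrow> complex^'m^'k" and G :: "real \<Rightarrow> complex^'m^'m" and R :: "real \<Rightarrow> complex^'k^'m"
  assumes "(S has_vector_derivative S') (at t)" "(G has_vector_derivative G') (at t)"
    "(R has_vector_derivative R') (at t)"
  shows "((\<lambda>\<tau>. S \<tau> ** G \<tau> ** C ** G \<tau> ** R \<tau>) has_vector_derivative
      S' ** G t ** C ** G t ** R t + S t ** G' ** C ** G t ** R t + S t ** G t ** C ** G' ** R t
       + S t ** G t ** C ** G t ** R') (at t)"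
  using has_vector_derivative_matrix_mul[OF has_vector_derivative_matrix_mul[OF
      has_vector_derivative_matrix_mul[OF has_vector_derivative_matrix_mul[OF assms(1,2)]
        has_vector_derivative_const] assms(2)] assms(3)]
  by (simp add: matrix_ring_distribs algebra_simps)

lemma complex_linear_wirtinger:
  fixes F :: "complex^'n^'m \<Rightarrow> complex^'p^'q"
  assumes add: "\<And>X Y. F (X + Y) = F X + F Y" and smult: "\<And>c X. F (msmult c X) = msmult c (F X)"
  shows "F (msmult (1/2) (D1 - msmult \<i> D2)) = msmult (1/2) (F D1 - msmult \<i> (F D2))"
    and "F (msmult (1/2) (D1 + msmult \<i> D2)) = msmult (1/2) (F D1 + msmult \<i> (F D2))"
proof -
  have "F (X - Y) = F X - F Y" for X Y
    using add[of "X - Y" Y] by (simp add: eq_diff_eq)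
  then show "F (msmult (1/2) (D1 - msmult \<i> D2)) = msmult (1/2) (F D1 - msmult \<i> (F D2))"
    and "F (msmult (1/2) (D1 + msmult \<i> D2)) = msmult (1/2) (F D1 + msmult \<i> (F D2))"
    by (simp_all add: smult add)
qed

context cauchy_flow
begin

definition J_dot :: "(nat \<Rightarrow> real) \<times> (nat \<Rightarrow> real) \<Rightarrow> complex^('n+'n)^('n+'n) \<Rightarrow> complex^2^2" where
  "J_dot p D = S_at p ** G_at p ** D ** G_at p ** K_blk_inv K ** R_at p"

definition W_at :: "(nat \<Rightarrow> real) \<times> (nat \<Rightarrow> real) \<Rightarrow> complex^('n+'n)^('n+'n) \<Rightarrow> complex^2^2" where
  "W_at p C = S_at p ** G_at p ** C ** G_at p ** R_at p"

definition W_dot :: "(nat \<Rightarrow> real) \<times> (nat \<Rightarrow> real) \<Rightarrow> complex^('n+'n)^('n+'n) \<Rightarrow> complex^('n+'n)^('n+'n)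
    \<Rightarrow> complex^2^2" where
  "W_dot p C D = (let S = S_at p; G = G_at p; R = R_at p in
   S ** G ** D ** G ** C ** G ** R + S ** G ** D ** G ** C ** G ** R
 + S ** G ** C ** G ** D ** G ** R + S ** G ** C ** G ** D ** G ** R
 - S ** G ** D ** C ** G ** R - S ** G ** C ** D ** G ** R)"

text \<open>The terms \<open>\<S> D G \<K>\<^sup>-\<^sup>1 \<R>\<close> and \<open>\<S> G \<K>\<^sup>-\<^sup>1 D \<R>\<close> cancel because \<open>D\<close> commutes with \<open>\<K>\<close>.\<close>

lemma J_line:
  assumes "1 \<le> m" and "regular (line_pt d m x y t)"
  defines "p \<equiv> line_pt d m x y t" and "D \<equiv> D_blk (A_dir K d m)"
  shows "((\<lambda>\<tau>. J_at (line_pt d m x y \<tau>)) has_vector_derivative J_dot p D + J_dot p D) (at t)"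
proof -
  let ?S = "S_at p" and ?G = "G_at p" and ?R = "R_at p" and ?Ki = "K_blk_inv K"
  have deriv: "((\<lambda>\<tau>. mat 1 + S_at (line_pt d m x y \<tau>) ** G_at (line_pt d m x y \<tau>) ** ?Ki
        ** R_at (line_pt d m x y \<tau>)) has_vector_derivative
      0 + (?S ** D ** ?G ** ?Ki ** ?R + ?S ** (?G ** D ** ?G + ?G ** D ** ?G - ?G ** D - D ** ?G) ** ?Ki ** ?R
      + ?S ** ?G ** ?Ki ** (D ** ?R))) (at t)"
    unfolding p_def D_def
    by (intro has_vector_derivative_add has_vector_derivative_const
        has_vector_derivative_S_G_C_R[OF S_line[OF assms(1)] G_line[OF assms(1,2)] R_line[OF assms(1)]])
  have "?S ** ?G ** ?Ki ** (D ** ?R) = ?S ** ?G ** (?Ki ** D) ** ?R"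
    by (simp add: matrix_mul_assoc)
  also have "\<dots> = ?S ** ?G ** (D ** ?Ki) ** ?R"
    by (simp add: D_def D_blk_K_blk_inv_commute[OF K_inv])
  finally have "0 + (?S ** D ** ?G ** ?Ki ** ?R
      + ?S ** (?G ** D ** ?G + ?G ** D ** ?G - ?G ** D - D ** ?G) ** ?Ki ** ?R
      + ?S ** ?G ** ?Ki ** (D ** ?R)) = J_dot p D + J_dot p D"
    unfolding J_dot_def
    by (simp only: matrix_ring_distribs matrix_mul_assoc) (simp add: algebra_simps)
  with deriv have "((\<lambda>\<tau>. mat 1 + S_at (line_pt d m x y \<tau>) ** G_at (line_pt d m x y \<tau>) ** ?Ki
        ** R_at (line_pt d m x y \<tau>)) has_vector_derivative J_dot p D + J_dot p D) (at t)"
    by simp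
  then show ?thesis by (simp add: J_at_def J_mat_def S_at_def G_at_def R_at_def)
qed

lemma W_line:
  assumes "1 \<le> m" and "regular (line_pt d m x y t)"
  defines "p \<equiv> line_pt d m x y t" and "D \<equiv> D_blk (A_dir K d m)"
  shows "((\<lambda>\<tau>. W_at (line_pt d m x y \<tau>) C) has_vector_derivative W_dot p C D) (at t)"
proof -
  let ?S = "S_at p" and ?G = "G_at p" and ?R = "R_at p"
  have "((\<lambda>\<tau>. W_at (line_pt d m x y \<tau>) C) has_vector_derivative
      ?S ** D ** ?G ** C ** ?G ** ?R
      + ?S ** (?G ** D ** ?G + ?G ** D ** ?G - ?G ** D - D ** ?G) ** C ** ?G ** ?R
      + ?S ** ?G ** C ** (?G ** D ** ?G + ?G ** D ** ?G - ?G ** D - D ** ?G) ** ?R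
      + ?S ** ?G ** C ** ?G ** (D ** ?R)) (at t)"
    unfolding W_at_def p_def D_def
    by (rule has_vector_derivative_S_G_C_G_R[OF S_line[OF assms(1)] G_line[OF assms(1,2)]
          R_line[OF assms(1)]])
  moreover have "?S ** D ** ?G ** C ** ?G ** ?R
      + ?S ** (?G ** D ** ?G + ?G ** D ** ?G - ?G ** D - D ** ?G) ** C ** ?G ** ?R
      + ?S ** ?G ** C ** (?G ** D ** ?G + ?G ** D ** ?G - ?G ** D - D ** ?G) ** ?R
      + ?S ** ?G ** C ** ?G ** (D ** ?R) = W_dot p C D"
    unfolding W_dot_def Let_def
    by (simp only: matrix_ring_distribs matrix_mul_assoc) (simp add: algebra_simps)
  ultimately show ?thesis by simp
qed

end

section \<open>The Yang--Mills equation\<close>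

context cauchy_flow
begin

definition vfun :: "(nat \<Rightarrow> real) \<Rightarrow> (nat \<Rightarrow> real) \<Rightarrow> complex^2^2" where
  "vfun = (\<lambda>xi eta. vmat K (r xi eta) (s xi eta) (M xi eta))"

lemma vfun_at:
  assumes "regular p"
  shows "case_prod vfun p = sigma3 ** J_at p ** sigma3"
proof (cases p)
  case (Pair a b)
  then show ?thesis
    using cauchy_point.vmat_eq[OF cauchy_point_at[OF assms]] by (simp add: vfun_def J_at_def)
qed

lemma v_line:
  assumes "1 \<le> m" and "regular (line_pt d m x y t)"
  defines "p \<equiv> line_pt d m x y t" and "D \<equiv> D_blk (A_dir K d m)"
  shows "((\<lambda>\<tau>. case_prod vfun (line_pt d m x y \<tau>)) has_vector_derivative
     sigma3 ** (J_dot p D + J_dot p D) ** sigma3) (at t)"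
proof (rule has_vector_derivative_eventually_eq)
  show "((\<lambda>\<tau>. sigma3 ** J_at (line_pt d m x y \<tau>) ** sigma3) has_vector_derivative
      sigma3 ** (J_dot p D + J_dot p D) ** sigma3) (at t)"
    using has_vector_derivative_matrix_mul[OF has_vector_derivative_matrix_mul
        [OF has_vector_derivative_const J_line[OF assms(1,2)]] has_vector_derivative_const]
    by (simp add: p_def D_def)
  show "\<forall>\<^sub>F \<tau> in nhds t. case_prod vfun (line_pt d m x y \<tau>) = sigma3 ** J_at (line_pt d m x y \<tau>) ** sigma3"
    using regular_near[OF assms(1,2)] by eventually_elim (rule vfun_at)
qed

lemma vfun_partials:
  assumes "1 \<le> m" and "regular (x, y)"
  shows "dxi m vfun x y = sigma3 ** (J_dot (x, y) (D_blk (A_xi K m)) + J_dot (x, y) (D_blk (A_xi K m))) ** sigma3"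
    and "deta m vfun x y = sigma3 ** (J_dot (x, y) (D_blk (A_eta K m)) + J_dot (x, y) (D_blk (A_eta K m))) ** sigma3"
    and "pdiff m vfun x y"
proof -
  have xi: "((\<lambda>t. vfun (x(m := t)) y) has_vector_derivative
      sigma3 ** (J_dot (x, y) (D_blk (A_xi K m)) + J_dot (x, y) (D_blk (A_xi K m))) ** sigma3) (at (x m))"
    using v_line[OF assms(1), of True x y "x m"] assms(2) by (simp add: line_pt_def A_dir_def)
  have eta: "((\<lambda>t. vfun x (y(m := t))) has_vector_derivative
      sigma3 ** (J_dot (x, y) (D_blk (A_eta K m)) + J_dot (x, y) (D_blk (A_eta K m))) ** sigma3) (at (y m))"
    using v_line[OF assms(1), of False x y "y m"] assms(2) by (simp add: line_pt_def A_dir_def)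
  show "dxi m vfun x y = sigma3 ** (J_dot (x, y) (D_blk (A_xi K m)) + J_dot (x, y) (D_blk (A_xi K m))) ** sigma3"
    unfolding dxi_def by (rule vector_derivative_at[OF xi])
  show "deta m vfun x y = sigma3 ** (J_dot (x, y) (D_blk (A_eta K m)) + J_dot (x, y) (D_blk (A_eta K m))) ** sigma3"
    unfolding deta_def by (rule vector_derivative_at[OF eta])
  show "pdiff m vfun x y"
    unfolding pdiff_def using xi eta differentiableI_vector by blast
qed

lemma vfun_wirtinger:
  assumes "1 \<le> m" and "regular (x, y)"
  shows "dz m vfun x y = sigma3 ** (J_dot (x, y) (Kz_blk K m) + J_dot (x, y) (Kz_blk K m)) ** sigma3"
    and "dzb m vfun x y = sigma3 ** (J_dot (x, y) (Kzb_blk K m) + J_dot (x, y) (Kzb_blk K m)) ** sigma3"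
proof -
  let ?F = "\<lambda>D. sigma3 ** (J_dot (x, y) D + J_dot (x, y) D) ** sigma3"
  have add: "?F (X + Z) = ?F X + ?F Z" for X Z
    by (simp add: J_dot_def matrix_ring_distribs add_ac)
  have smult: "?F (msmult c X) = msmult c (?F X)" for c X
    by (simp add: J_dot_def msmult_add[symmetric]
        flip: msmult_matrix_mul_left msmult_matrix_mul_right)
  show "dz m vfun x y = ?F (Kz_blk K m)"
    unfolding dz_def vfun_partials[OF assms] Kz_blk_def complex_linear_wirtinger(1)[of ?F, OF add smult] ..
  show "dzb m vfun x y = ?F (Kzb_blk K m)"
    unfolding dzb_def vfun_partials[OF assms] Kzb_blk_def complex_linear_wirtinger(2)[of ?F, OF add smult] ..
qed

text \<open>Multiplying by \<open>v\<^sup>-\<^sup>1 = \<sigma>\<^sub>3 J\<^sup>-\<^sup>1 \<sigma>\<^sub>3\<close> turns \<open>G \<K>\<^sup>-\<^sup>1 \<R>\<close> into \<open>\<K>\<^sup>-\<^sup>1 G \<R>\<close>.\<close>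

lemma log_derivative_at:
  assumes "regular p"
  shows "sigma3 ** (J_dot p D + J_dot p D) ** sigma3 ** matrix_inv (case_prod vfun p)
     = sigma3 ** (W_at p (D ** K_blk_inv K) + W_at p (D ** K_blk_inv K)) ** sigma3"
proof -
  interpret cauchy_point K "case_prod M p" "case_prod r p" "case_prod s p"
    using cauchy_point_at[OF assms] .
  have "(sigma3 ** J ** sigma3) ** (sigma3 ** (mat 1 - Y) ** sigma3)
      = sigma3 ** J ** (sigma3 ** sigma3) ** (mat 1 - Y) ** sigma3"
    by (simp add: matrix_mul_assoc)
  also have "\<dots> = sigma3 ** (J ** (mat 1 - Y)) ** sigma3"
    by (simp add: sigma3_sigma3 matrix_mul_assoc)
  also have "\<dots> = mat 1"
    by (simp add: J_mat_inverse sigma3_sigma3)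
  finally have inv: "matrix_inv (case_prod vfun p) = sigma3 ** (mat 1 - Y) ** sigma3"
    using vfun_at[OF assms] by (simp add: J_at_def matrix_inv_unique)
  have JY: "J_dot p D ** (mat 1 - Y) = W_at p (D ** K_blk_inv K)"
  proof -
    have "J_dot p D ** (mat 1 - Y) = S_at p ** G_at p ** D ** (G_at p ** K_blk_inv K ** R_at p ** (mat 1 - Y))"
      by (simp add: J_dot_def matrix_mul_assoc)
    then show ?thesis
      using resolvent_mult_inverse_J_mat
      by (simp add: W_at_def G_at_def R_at_def matrix_mul_assoc)
  qed
  have "sigma3 ** (J_dot p D + J_dot p D) ** sigma3 ** matrix_inv (case_prod vfun p)
      = sigma3 ** (J_dot p D + J_dot p D) ** (sigma3 ** sigma3) ** (mat 1 - Y) ** sigma3"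
    unfolding inv by (simp only: matrix_mul_assoc)
  also have "\<dots> = sigma3 ** (J_dot p D ** (mat 1 - Y) + J_dot p D ** (mat 1 - Y)) ** sigma3"
    by (simp only: sigma3_sigma3 matrix_mul_rid matrix_add_ldistrib matrix_add_rdistrib matrix_mul_assoc)
  finally show ?thesis unfolding JY .
qed

lemma log_derivative_line:
  assumes F: "\<And>a b. regular (a, b) \<Longrightarrow> F a b = sigma3 ** (J_dot (a, b) C + J_dot (a, b) C) ** sigma3"
    and "1 \<le> m" and "regular (line_pt d m x y t)"
  defines "p \<equiv> line_pt d m x y t" and "C' \<equiv> C ** K_blk_inv K"
  shows "((\<lambda>\<tau>. case_prod (\<lambda>a b. F a b ** matrix_inv (vfun a b)) (line_pt d m x y \<tau>))
     has_vector_derivative sigma3 ** (W_dot p C' (D_blk (A_dir K d m))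
        + W_dot p C' (D_blk (A_dir K d m))) ** sigma3) (at t)"
proof (rule has_vector_derivative_eventually_eq)
  show "((\<lambda>\<tau>. sigma3 ** (W_at (line_pt d m x y \<tau>) C' + W_at (line_pt d m x y \<tau>) C') ** sigma3)
      has_vector_derivative sigma3 ** (W_dot p C' (D_blk (A_dir K d m))
        + W_dot p C' (D_blk (A_dir K d m))) ** sigma3) (at t)"
    using has_vector_derivative_matrix_mul[OF has_vector_derivative_matrix_mul[OF
          has_vector_derivative_const has_vector_derivative_add[OF W_line[OF assms(2,3)]
          W_line[OF assms(2,3)]]] has_vector_derivative_const]
    unfolding p_def by (simp only: times0_left times0_right add_0_left add_0_right)
  show "\<forall>\<^sub>F \<tau> in nhds t. case_prod (\<lambda>a b. F a b ** matrix_inv (vfun a b)) (line_pt d m x y \<tau>)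
      = sigma3 ** (W_at (line_pt d m x y \<tau>) C' + W_at (line_pt d m x y \<tau>) C') ** sigma3"
    using regular_near[OF assms(2,3)]
  proof eventually_elim
    case (elim \<tau>)
    then show ?case
      using log_derivative_at[OF elim] F[of "fst (line_pt d m x y \<tau>)" "snd (line_pt d m x y \<tau>)"]
      by (simp add: C'_def case_prod_beta)
  qed
qed

lemma W_dot_add: "W_dot p C (X + Z) = W_dot p C X + W_dot p C Z"
  unfolding W_dot_def Let_def
  by (simp only: matrix_ring_distribs matrix_mul_assoc) (simp add: algebra_simps)

lemma W_dot_msmult: "W_dot p C (msmult c X) = msmult c (W_dot p C X)"
  unfolding W_dot_def Let_def
  by (simp only: msmult_add msmult_diff flip: msmult_matrix_mul_left msmult_matrix_mul_right)

lemma W_dot_uminus: "W_dot p (- C) D = - W_dot p C D"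
  unfolding W_dot_def Let_def
  by (simp only: matrix_ring_distribs matrix_mul_assoc) (simp add: algebra_simps)

text \<open>The zero-curvature property behind the Yang--Mills equation.\<close>

lemma W_dot_symmetric: "W_dot p C D = W_dot p D C"
  unfolding W_dot_def Let_def by (simp add: algebra_simps)

end

context cauchy_flow
begin

lemma log_derivative_wirtinger:
  assumes F: "\<And>a b. regular (a, b) \<Longrightarrow> F a b = sigma3 ** (J_dot (a, b) C + J_dot (a, b) C) ** sigma3"
    and "1 \<le> m" and "regular (x, y)"
  defines "\<Phi> \<equiv> \<lambda>a b. F a b ** matrix_inv (vfun a b)"
    and "H \<equiv> \<lambda>D. sigma3 ** (W_dot (x, y) (C ** K_blk_inv K) D + W_dot (x, y) (C ** K_blk_inv K) D) ** sigma3"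
  shows "pdiff m \<Phi> x y" "dz m \<Phi> x y = H (Kz_blk K m)" "dzb m \<Phi> x y = H (Kzb_blk K m)"
proof -
  have xi: "((\<lambda>t. \<Phi> (x(m := t)) y) has_vector_derivative H (D_blk (A_xi K m))) (at (x m))"
    using log_derivative_line[OF F assms(2), of True x y "x m"] assms(3)
    by (simp add: \<Phi>_def H_def line_pt_def A_dir_def)
  have eta: "((\<lambda>t. \<Phi> x (y(m := t))) has_vector_derivative H (D_blk (A_eta K m))) (at (y m))"
    using log_derivative_line[OF F assms(2), of False x y "y m"] assms(3)
    by (simp add: \<Phi>_def H_def line_pt_def A_dir_def)
  show "pdiff m \<Phi> x y"
    unfolding pdiff_def using xi eta differentiableI_vector by blast
  have add: "H (X + Z) = H X + H Z" for X Z
    by (simp add: H_def W_dot_add matrix_ring_distribs add_ac)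
  have smult: "H (msmult c X) = msmult c (H X)" for c X
    by (simp only: H_def W_dot_msmult msmult_add[symmetric] msmult_matrix_mul_left[symmetric]
        msmult_matrix_mul_right[symmetric])
  show "dz m \<Phi> x y = H (Kz_blk K m)"
    unfolding dz_def dxi_def deta_def vector_derivative_at[OF xi] vector_derivative_at[OF eta]
      Kz_blk_def complex_linear_wirtinger(1)[of H, OF add smult] ..
  show "dzb m \<Phi> x y = H (Kzb_blk K m)"
    unfolding dzb_def dxi_def deta_def vector_derivative_at[OF xi] vector_derivative_at[OF eta]
      Kzb_blk_def complex_linear_wirtinger(2)[of H, OF add smult] ..
qed

text \<open>With \<open>\<K>\<^sub>z(n+1) \<K>\<^sup>-\<^sup>1 = \<K>\<^sub>z(n)\<close> and \<open>\<K>\<^sub>z\<^sub>b(n) \<K>\<^sup>-\<^sup>1 = -\<K>\<^sub>z\<^sub>b(n+1)\<close>, both terms of the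
  equation become \<open>\<plusminus>2 \<sigma>\<^sub>3 W'(\<K>\<^sub>z(n), \<K>\<^sub>z\<^sub>b(n+1)) \<sigma>\<^sub>3\<close> by the symmetry of \<open>W'\<close>.\<close>

lemma yang_mills:
  assumes "1 \<le> n" and "regular (x, y)"
  defines "\<Phi> \<equiv> \<lambda>a b. dz (n+1) vfun a b ** matrix_inv (vfun a b)"
    and "\<Psi> \<equiv> \<lambda>a b. dzb n vfun a b ** matrix_inv (vfun a b)"
  shows "pdiff (n+1) \<Phi> x y" "pdiff n \<Psi> x y" "dzb (n+1) \<Phi> x y + dz n \<Psi> x y = 0"
proof -
  have n1: "1 \<le> n + 1" by simp
  note \<Phi>_facts = log_derivative_wirtinger[OF vfun_wirtinger(1)[OF n1] n1 assms(2), folded \<Phi>_def]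
  note \<Psi>_facts = log_derivative_wirtinger[OF vfun_wirtinger(2)[OF assms(1)] assms(1,2), folded \<Psi>_def]
  show "pdiff (n+1) \<Phi> x y" "pdiff n \<Psi> x y"
    using \<Phi>_facts(1) \<Psi>_facts(1) by simp_all
  let ?X = "W_dot (x, y) (Kz_blk K n) (Kzb_blk K (Suc n))"
  have "dzb (n+1) \<Phi> x y = sigma3 ** (?X + ?X) ** sigma3"
    using \<Phi>_facts(3) Kz_blk_Suc[OF K_inv, of n] by simp
  moreover have "W_dot (x, y) (- Kzb_blk K (Suc n)) (Kz_blk K n) = - ?X"
    unfolding W_dot_uminus by (subst W_dot_symmetric) (rule refl)
  then have "dz n \<Psi> x y = sigma3 ** (- ?X + - ?X) ** sigma3"
    using \<Psi>_facts(2) by (simp only: Kzb_blk_Suc[OF K_inv])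
  ultimately show "dzb (n+1) \<Phi> x y + dz n \<Psi> x y = 0"
    by (simp only: minus_add_distrib[symmetric] matrix_mul_uminus_left matrix_mul_uminus_right
        right_minus)
qed

end

theorem theorem3:
  fixes K :: "complex^'n^'n"
    and r s :: "(nat \<Rightarrow> real) \<Rightarrow> (nat \<Rightarrow> real) \<Rightarrow> complex^'n"
    and M :: "(nat \<Rightarrow> real) \<Rightarrow> (nat \<Rightarrow> real) \<Rightarrow> complex^'n^'n"
  assumes K_inv: "invertible K"
    and K_spec: "\<not> (\<exists>\<mu>. is_eigenvalue K \<mu> \<and> is_eigenvalue (- matrix_inv (mconj K)) \<mu>)"
    and M_eq: "\<And>xi eta. K ** M xi eta + M xi eta ** matrix_inv (mconj K)
                 = - (outer (r xi eta) (vconj (s xi eta)) ** matrix_inv (mconj K))"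
    and r_xi: "\<And>n xi eta. n \<ge> 1 \<Longrightarrow>
       ((\<lambda>t. r (xi(n := t)) eta) has_vector_derivative
          ((mpow K n + msmult ((-1)^(n+1)) (mpow (matrix_inv K) n)) *v r xi eta)) (at (xi n))"
    and r_eta: "\<And>n xi eta. n \<ge> 1 \<Longrightarrow>
       ((\<lambda>t. r xi (eta(n := t))) has_vector_derivative
          (msmult \<i> (mpow K n - msmult ((-1)^(n+1)) (mpow (matrix_inv K) n)) *v r xi eta)) (at (eta n))"
    and s_xi: "\<And>n xi eta. n \<ge> 1 \<Longrightarrow>
       ((\<lambda>t. s (xi(n := t)) eta) has_vector_derivative
          ((mpow (transpose K) n + msmult ((-1)^(n+1)) (mpow (matrix_inv (transpose K)) n))
             *v s xi eta)) (at (xi n))"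
    and s_eta: "\<And>n xi eta. n \<ge> 1 \<Longrightarrow>
       ((\<lambda>t. s xi (eta(n := t))) has_vector_derivative
          (msmult \<i> (mpow (transpose K) n - msmult ((-1)^(n+1)) (mpow (matrix_inv (transpose K)) n))
             *v s xi eta)) (at (eta n))"
    and v_def: "v = (\<lambda>xi eta. vmat K (r xi eta) (s xi eta) (M xi eta))"
    and dom: "invertible (mat 1 - mconj (M xi eta) ** M xi eta)"
    and n_pos: "n \<ge> 1"
  shows "pdiff n v xi eta \<and> pdiff (n+1) v xi eta
       \<and> pdiff (n+1) (\<lambda>a b. dz (n+1) v a b ** matrix_inv (v a b)) xi eta
       \<and> pdiff n (\<lambda>a b. dzb n v a b ** matrix_inv (v a b)) xi eta
       \<and> dzb (n+1) (\<lambda>a b. dz (n+1) v a b ** matrix_inv (v a b)) xi eta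
         + dz n (\<lambda>a b. dzb n v a b ** matrix_inv (v a b)) xi eta = 0
       \<and> adj (v xi eta) = v xi eta
       \<and> det (v xi eta) = 1
       \<and> (pos_def (v xi eta) \<or> neg_def (v xi eta))"
proof -
  interpret cauchy_flow K r s M
    using K_inv K_spec M_eq r_xi r_eta s_xi s_eta by unfold_locales
  have reg: "regular (xi, eta)" using dom by (simp add: regular_def)
  interpret point: cauchy_point K "M xi eta" "r xi eta" "s xi eta"
    using cauchy_point_at[OF reg] by simp
  have v: "v = vfun" by (simp add: v_def vfun_def)
  show ?thesis
    unfolding v
    using vfun_partials(3)[OF n_pos reg] vfun_partials(3)[of "n+1", OF _ reg] yang_mills[OF n_pos reg]
      point.adj_vmat point.det_vmat point.vmat_definite
    by (simp add: vfun_def)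
qed
end
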